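(* Let $\Omega\subset\mathbb{R}^d$ be a bounded domain, $\kappa\in L^\infty(\Omega)$ with $\kappa\ge\kappa_0>0$, and $a(u,v)=\int_\Omega\kappa\nabla u\cdot\nabla v\,dx$, $\|u\|_a^2=a(u,u)$. Let $V_H\subset H^1_0(\Omega)$ be a finite-dimensional space with $V_H=V_{H,1}+V_{H,2}$ for subspaces $V_{H,1},V_{H,2}$, and define $$\gamma=\sup_{v_1\in V_{H,1},v_2\in V_{H,2}}\frac{(v_1,v_2)}{\|v_1\|\|v_2\|},\quad \gamma_a=\sup_{v_1\in V_{H,1},v_2\in V_{H,2}}\frac{a(v_1,v_2)}{\|v_1\|_a\|v_2\|_a},\quad \alpha=\sup_{v_2\in V_{H,2}}\frac{\|v_2\|_a}{\|v_2\|},$$ assuming $\gamma<1$ and $\gamma_a<1$. Let $\tau>0$, $N\ge2$, and let $u_{H,1}^n\in V_{H,1}$, $u_{H,2}^n\in V_{H,2}$ ($n=0,\dots,N$), $u_H^n=u_{H,1}^n+u_{H,2}^n$, satisfy for $n=1,\dots,N-1$: $$(u_H^{n+1}-2u_H^n+u_H^{n-1},w)+\frac{\tau^2}{2}a(u_{H,1}^{n+1}+u_{H,1}^{n-1}+2u_{H,2}^n,w)=0\quad\forall w\in V_{H,1},$$ $$(u_H^{n+1}-2u_H^n+u_H^{n-1},w)+\tau^2a(u_{H,1}^{n}+u_{H,2}^n,w)=0\quad\forall w\in V_{H,2}.$$ Let $E^{\frac12}=\|u_H^{1}-u_H^0\|^2+\frac{\tau^2}{2}\sum_{i=1,2}(\|u_{H,i}^{1}\|_a^2+\|u_{H,i}^0\|_a^2)+\tau^2a(u_{H,2}^{1},u_{H,1}^0)+\tau^2a(u_{H,1}^{1},u_{H,2}^0)-\frac{\tau^2}{2}\|u_{H,2}^{1}-u_{H,2}^0\|_a^2$.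 If $2(1-\gamma)\alpha^{-2}\ge\tau^2$, then for all $n=0,\dots,N-1$, $$\Big(1-\gamma^2-\frac{\alpha^2\tau^2}{2}\Big)\|u_{H,2}^{n+1}-u_{H,2}^n\|^2+\frac{\tau^2(1-\gamma_a)}{2}\sum_{i=1,2}\Big(\|u_{H,i}^{n+1}\|_a^2+\|u_{H,i}^n\|_a^2\Big)\le E^{\frac12}.$$
   Context: $(\cdot,\cdot)$ and $\|\cdot\|$ denote the $L^2(\Omega)$ inner product and norm. *)

theory Defs
  imports "HOL-Analysis.Analysis"
begin

text \<open>Functions on R^d are modelled as maps 'a \<Rightarrow> real with 'a a Euclidean space
 (d = DIM('a)).\<close>

fun Ck :: "nat \<Rightarrow> ('a::euclidean_space \<Rightarrow> real) \<Rightarrow> bool" where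
  "Ck 0 f = continuous_on UNIV f"
| "Ck (Suc k) f = ((\<forall>x. f differentiable (at x)) \<and>
      (\<forall>i\<in>Basis. Ck k (\<lambda>x. frechet_derivative f (at x) i)))"

definition test_fun :: "'a::euclidean_space set \<Rightarrow> ('a \<Rightarrow> real) \<Rightarrow> bool" where
  "test_fun \<Omega> \<phi> \<longleftrightarrow> (\<forall>k. Ck k \<phi>) \<and> compact (closure {x. \<phi> x \<noteq> 0})
      \<and> closure {x. \<phi> x \<noteq> 0} \<subseteq> \<Omega>"

definition grad :: "('a::euclidean_space \<Rightarrow> real) \<Rightarrow> 'a \<Rightarrow> 'a" where
  "grad f x = (\<Sum>i\<in>Basis. frechet_derivative f (at x) i *\<^sub>R i)"

definition L2_on :: "'a::euclidean_space set \<Rightarrow> ('a \<Rightarrow> real) \<Rightarrow> bool" where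
  "L2_on \<Omega> u \<longleftrightarrow> set_borel_measurable lebesgue \<Omega> u \<and>
      set_integrable lebesgue \<Omega> (\<lambda>x. (u x)\<^sup>2)"

definition weak_grad :: "'a::euclidean_space set \<Rightarrow> ('a \<Rightarrow> real) \<Rightarrow> ('a \<Rightarrow> 'a) \<Rightarrow> bool" where
  "weak_grad \<Omega> u g \<longleftrightarrow> (\<forall>i\<in>Basis. L2_on \<Omega> (\<lambda>x. g x \<bullet> i)) \<and>
     (\<forall>\<phi>. test_fun \<Omega> \<phi> \<longrightarrow> (\<forall>i\<in>Basis.
        (LINT x:\<Omega>|lebesgue. u x * (grad \<phi> x \<bullet> i)) = - (LINT x:\<Omega>|lebesgue. (g x \<bullet> i) * \<phi> x)))"

definition wgrad :: "'a::euclidean_space set \<Rightarrow> ('a \<Rightarrow> real) \<Rightarrow> 'a \<Rightarrow> 'a" where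
  "wgrad \<Omega> u = (SOME g. weak_grad \<Omega> u g)"

definition H10 :: "'a::euclidean_space set \<Rightarrow> ('a \<Rightarrow> real) set" where
  "H10 \<Omega> = {u. L2_on \<Omega> u \<and> (\<exists>g. weak_grad \<Omega> u g \<and>
      (\<exists>\<phi>::nat \<Rightarrow> 'a \<Rightarrow> real. (\<forall>k. test_fun \<Omega> (\<phi> k)) \<and>
        (\<lambda>k. (LINT x:\<Omega>|lebesgue. (\<phi> k x - u x)\<^sup>2 + (norm (grad (\<phi> k) x - g x))\<^sup>2))
          \<longlonglongrightarrow> 0))}"

definition l2ip :: "'a::euclidean_space set \<Rightarrow> ('a \<Rightarrow> real) \<Rightarrow> ('a \<Rightarrow> real) \<Rightarrow> real" where
  "l2ip \<Omega> u v = (LINT x:\<Omega>|lebesgue. u x * v x)"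

definition l2norm :: "'a::euclidean_space set \<Rightarrow> ('a \<Rightarrow> real) \<Rightarrow> real" where
  "l2norm \<Omega> u = sqrt (l2ip \<Omega> u u)"

definition aform :: "'a::euclidean_space set \<Rightarrow> ('a \<Rightarrow> real) \<Rightarrow> ('a \<Rightarrow> real) \<Rightarrow> ('a \<Rightarrow> real) \<Rightarrow> real" where
  "aform \<Omega> \<kappa> u v = (LINT x:\<Omega>|lebesgue. \<kappa> x * (wgrad \<Omega> u x \<bullet> wgrad \<Omega> v x))"

definition anorm :: "'a::euclidean_space set \<Rightarrow> ('a \<Rightarrow> real) \<Rightarrow> ('a \<Rightarrow> real) \<Rightarrow> real" where
  "anorm \<Omega> \<kappa> u = sqrt (aform \<Omega> \<kappa> u u)"

definition bounded_domain :: "'a::euclidean_space set \<Rightarrow> bool" where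
  "bounded_domain \<Omega> \<longleftrightarrow> open \<Omega> \<and> connected \<Omega> \<and> bounded \<Omega> \<and> \<Omega> \<noteq> {}"

definition Linf_on :: "'a::euclidean_space set \<Rightarrow> ('a \<Rightarrow> real) \<Rightarrow> bool" where
  "Linf_on \<Omega> \<kappa> \<longleftrightarrow> set_borel_measurable lebesgue \<Omega> \<kappa> \<and>
     (\<exists>C. AE x in lebesgue. x \<in> \<Omega> \<longrightarrow> \<bar>\<kappa> x\<bar> \<le> C)"

definition fun_subspace :: "('a \<Rightarrow> real) set \<Rightarrow> bool" where
  "fun_subspace V \<longleftrightarrow> (\<lambda>x. 0) \<in> V \<and> (\<forall>u\<in>V. \<forall>v\<in>V. (\<lambda>x. u x + v x) \<in> V) \<and>
     (\<forall>c::real. \<forall>u\<in>V. (\<lambda>x. c * u x) \<in> V)"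

definition fin_dim_fun_space :: "('a \<Rightarrow> real) set \<Rightarrow> bool" where
  "fin_dim_fun_space V \<longleftrightarrow> fun_subspace V \<and>
     (\<exists>B. finite B \<and> B \<subseteq> V \<and> V = {(\<lambda>x. \<Sum>b\<in>B. c b * b x) | c. True})"

definition fun_sum_space :: "('a \<Rightarrow> real) set \<Rightarrow> ('a \<Rightarrow> real) set \<Rightarrow> ('a \<Rightarrow> real) set" where
  "fun_sum_space V1 V2 = {(\<lambda>x. v1 x + v2 x) | v1 v2. v1 \<in> V1 \<and> v2 \<in> V2}"

end

theory Submission
  imports Defs "HOL-Computational_Algebra.Polynomial"
begin

(* Testing the first equation of the scheme with u_{H,1}^{n+1} - u_{H,1}^{n-1} and the second with
   u_{H,2}^{n+1} - u_{H,2}^{n-1} shows that the discrete energy E^{n+1/2} does not depend on n.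
   It is bounded from below by the left-hand side of the claim using the strengthened
   Cauchy-Schwarz inequalities |(v1, v2)| <= gamma |v1| |v2| and |a(v1, v2)| <= gamma_a |v1|_a |v2|_a
   between the two subspaces, the inverse inequality |v2|_a <= alpha |v2| on V_{H,2}, and AM-GM.

   The form a is
   defined through weak gradients picked by Hilbert's choice operator, so it is bilinear only
   because weak gradients are unique almost everywhere; this is the fundamental lemma of the
   calculus of variations, proved with smooth cut-offs of boxes. The constants gamma, gamma_a and
   alpha are suprema of real sets, meaningful only because these sets are bounded; for alpha this
   uses that V_H is finite-dimensional, via Gram-Schmidt orthonormalisation modulo null vectors. *)

section \<open>Smooth cut-off functions\<close>

text \<open>\<open>C\<^sup>\<infinity>\<close> on the real line, encoded as membership in a family of differentiable
  functions that is closed under differentiation.\<close>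

definition smooth_real :: "(real \<Rightarrow> real) \<Rightarrow> bool" where
  "smooth_real g \<longleftrightarrow> (\<exists>S. g \<in> S \<and> (\<forall>f\<in>S. \<exists>f'\<in>S. \<forall>t. (f has_real_derivative f' t) (at t)))"

lemma smooth_realI:
  assumes "g \<in> S" "\<And>f. f \<in> S \<Longrightarrow> \<exists>f'\<in>S. \<forall>t. (f has_real_derivative f' t) (at t)"
  shows "smooth_real g"
  using assms unfolding smooth_real_def by blast

lemma smooth_real_has_derivative:
  assumes "smooth_real g"
  obtains g' where "smooth_real g'" "\<And>t. (g has_real_derivative g' t) (at t)"
  using assms unfolding smooth_real_def by metis

lemma smooth_real_const: "smooth_real (\<lambda>t. c)"
  by (rule smooth_realI[of _ "{\<lambda>t. c, \<lambda>t. 0}"]) auto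

inductive_set smooth_algebra :: "(real \<Rightarrow> real) set" where
  smooth: "smooth_real f \<Longrightarrow> f \<in> smooth_algebra"
| add: "f \<in> smooth_algebra \<Longrightarrow> g \<in> smooth_algebra \<Longrightarrow> (\<lambda>t. f t + g t) \<in> smooth_algebra"
| mult: "f \<in> smooth_algebra \<Longrightarrow> g \<in> smooth_algebra \<Longrightarrow> (\<lambda>t. f t * g t) \<in> smooth_algebra"
| inverse: "f \<in> smooth_algebra \<Longrightarrow> (\<And>t. f t \<noteq> 0) \<Longrightarrow> (\<lambda>t. inverse (f t)) \<in> smooth_algebra"
| affine: "f \<in> smooth_algebra \<Longrightarrow> (\<lambda>t. f (c * t + d)) \<in> smooth_algebra"

lemma smooth_algebra_has_derivative:
  assumes "f \<in> smooth_algebra"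
  shows "\<exists>f'\<in>smooth_algebra. \<forall>t. (f has_real_derivative f' t) (at t)"
  using assms
proof induction
  case (smooth f)
  obtain f' where "smooth_real f'" "\<And>t. (f has_real_derivative f' t) (at t)"
    using smooth_real_has_derivative[OF smooth.hyps] by blast
  then show ?case by (blast intro: smooth_algebra.smooth)
next
  case (add f g)
  then obtain f' g' where f': "f' \<in> smooth_algebra" "\<And>t. (f has_real_derivative f' t) (at t)"
    and g': "g' \<in> smooth_algebra" "\<And>t. (g has_real_derivative g' t) (at t)" by blast
  have "(\<lambda>t. f' t + g' t) \<in> smooth_algebra" using f'(1) g'(1) by (rule smooth_algebra.add)
  moreover have "((\<lambda>t. f t + g t) has_real_derivative f' t + g' t) (at t)" for t
    using f'(2) g'(2) by (rule DERIV_add)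
  ultimately show ?case by (intro bexI[of _ "\<lambda>t. f' t + g' t"]) simp_all
next
  case (mult f g)
  then obtain f' g' where f': "f' \<in> smooth_algebra" "\<And>t. (f has_real_derivative f' t) (at t)"
    and g': "g' \<in> smooth_algebra" "\<And>t. (g has_real_derivative g' t) (at t)" by blast
  have "(\<lambda>t. f' t * g t + g' t * f t) \<in> smooth_algebra"
    using smooth_algebra.add[OF smooth_algebra.mult[OF f'(1) mult.hyps(2)]
        smooth_algebra.mult[OF g'(1) mult.hyps(1)]] .
  moreover have "((\<lambda>t. f t * g t) has_real_derivative f' t * g t + g' t * f t) (at t)" for t
    using f'(2) g'(2) by (rule DERIV_mult)
  ultimately show ?case by (intro bexI[of _ "\<lambda>t. f' t * g t + g' t * f t"]) simp_all
next
  case (inverse f)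
  then obtain f' where f': "f' \<in> smooth_algebra" "\<And>t. (f has_real_derivative f' t) (at t)" by blast
  have inv: "(\<lambda>t. inverse (f t)) \<in> smooth_algebra"
    using inverse.hyps by (rule smooth_algebra.inverse)
  have "(\<lambda>t. - 1 * f' t * (inverse (f t) * inverse (f t))) \<in> smooth_algebra"
    using smooth_algebra.mult[OF smooth_algebra.mult[OF smooth_algebra.smooth[OF smooth_real_const] f'(1)]
        smooth_algebra.mult[OF inv inv]] .
  moreover have "((\<lambda>t. inverse (f t)) has_real_derivative - 1 * f' t * (inverse (f t) * inverse (f t))) (at t)" for t
    using DERIV_inverse_fun[OF f'(2) inverse.hyps(2)] by (simp add: power2_eq_square)
  ultimately show ?case
    by (intro bexI[of _ "\<lambda>t. - 1 * f' t * (inverse (f t) * inverse (f t))"]) simp_all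
next
  case (affine f c d)
  then obtain f' where f': "f' \<in> smooth_algebra" "\<And>t. (f has_real_derivative f' t) (at t)" by blast
  have "(\<lambda>t. c * f' (c * t + d)) \<in> smooth_algebra"
    using smooth_algebra.mult[OF smooth_algebra.smooth[OF smooth_real_const]
        smooth_algebra.affine[OF f'(1), of c d]] .
  moreover have "((\<lambda>t. f (c * t + d)) has_real_derivative c * f' (c * t + d)) (at t)" for t
    by (rule DERIV_chain2[OF f'(2), THEN DERIV_cong]) (auto intro!: derivative_eq_intros)
  ultimately show ?case
    by (intro bexI[of _ "\<lambda>t. c * f' (c * t + d)"]) simp_all
qed

lemma smooth_algebra_smooth: "f \<in> smooth_algebra \<Longrightarrow> smooth_real f"
  by (rule smooth_realI[of f smooth_algebra]) (auto intro: smooth_algebra_has_derivative)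

lemma tendsto_poly_times_exp_neg_at_top: "((\<lambda>s. poly p s * exp (- s)) \<longlongrightarrow> (0::real)) at_top"
proof -
  have eq: "poly p s * exp (- s) = (\<Sum>i\<le>degree p. coeff p i * (s ^ i / exp s))" for s :: real
    by (simp add: poly_altdef sum_divide_distrib exp_minus field_simps)
  have "((\<lambda>s. \<Sum>i\<le>degree p. coeff p i * (s ^ i / exp s)) \<longlongrightarrow> (\<Sum>i\<le>degree p. coeff p i * 0)) at_top"
    by (intro tendsto_sum tendsto_mult tendsto_const tendsto_power_div_exp_0)
  then show ?thesis unfolding eq by simp
qed

text \<open>The derivatives of \<open>t \<mapsto> exp (-1/t)\<close>, extended by \<open>0\<close> to \<open>t \<le> 0\<close>, are all of
  the form \<open>exp_flat p\<close>.\<close>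

definition exp_flat :: "real poly \<Rightarrow> real \<Rightarrow> real" where
  "exp_flat p t = (if t > 0 then poly p (inverse t) * exp (- inverse t) else 0)"

lemma exp_flat_has_derivative_0: "(exp_flat p has_real_derivative 0) (at 0)"
proof -
  have "((\<lambda>h. (exp_flat p (0 + h) - exp_flat p 0) / h) \<longlongrightarrow> 0) (at 0)"
  proof (rule filterlim_split_at)
    show "((\<lambda>h. (exp_flat p (0 + h) - exp_flat p 0) / h) \<longlongrightarrow> 0) (at_left 0)"
      by (rule tendsto_eventually) (auto simp: exp_flat_def eventually_at_left_field intro!: exI[of _ "-1"])
    have "((\<lambda>h. poly (pCons 0 p) (inverse h) * exp (- inverse h)) \<longlongrightarrow> (0::real)) (at_right 0)"
      using filterlim_compose[OF tendsto_poly_times_exp_neg_at_top[of "pCons 0 p"]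
          filterlim_inverse_at_top_right]
      by (simp add: o_def)
    moreover have "\<forall>\<^sub>F h in at_right 0.
        poly (pCons 0 p) (inverse h) * exp (- inverse h) = (exp_flat p (0 + h) - exp_flat p 0) / h"
      by (auto simp: exp_flat_def eventually_at_right_field field_simps intro!: exI[of _ 1])
    ultimately show "((\<lambda>h. (exp_flat p (0 + h) - exp_flat p 0) / h) \<longlongrightarrow> 0) (at_right 0)"
      by (rule Lim_transform_eventually)
  qed
  then show ?thesis by (simp add: DERIV_def)
qed

lemma exp_flat_has_derivative:
  "(exp_flat p has_real_derivative exp_flat ([:0, 0, 1:] * (p - pderiv p)) t) (at t)"
proof -
  consider "t > 0" | "t < 0" | "t = 0" by linarith
  then show ?thesis
  proof cases
    case 1
    have inv: "(inverse has_real_derivative - (inverse t ^ 2)) (at t)"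
      using DERIV_inverse[of t] 1 by (simp add: power2_eq_square)
    have "((\<lambda>t. poly p (inverse t) * exp (- inverse t)) has_real_derivative
        poly (pderiv p) (inverse t) * (- (inverse t ^ 2)) * exp (- inverse t)
        + exp (- inverse t) * (- (- (inverse t ^ 2))) * poly p (inverse t)) (at t)"
      by (rule DERIV_mult[OF DERIV_chain2[OF poly_DERIV inv] DERIV_chain2[OF DERIV_exp DERIV_minus[OF inv]]])
    moreover have "poly (pderiv p) (inverse t) * (- (inverse t ^ 2)) * exp (- inverse t)
        + exp (- inverse t) * (- (- (inverse t ^ 2))) * poly p (inverse t)
        = exp_flat ([:0, 0, 1:] * (p - pderiv p)) t"
      using 1 by (simp add: exp_flat_def algebra_simps power2_eq_square)
    ultimately have "((\<lambda>t. poly p (inverse t) * exp (- inverse t)) has_real_derivative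
        exp_flat ([:0, 0, 1:] * (p - pderiv p)) t) (at t)"
      by simp
    then show ?thesis
      by (rule has_field_derivative_transform_within_open[where S="{0<..}"]) (use 1 in \<open>auto simp: exp_flat_def\<close>)
  next
    case 2
    have "((\<lambda>t. 0) has_real_derivative exp_flat ([:0, 0, 1:] * (p - pderiv p)) t) (at t)"
      using 2 by (simp add: exp_flat_def)
    then show ?thesis
      by (rule has_field_derivative_transform_within_open[where S="{..<0}"]) (use 2 in \<open>auto simp: exp_flat_def\<close>)
  next
    case 3
    then show ?thesis using exp_flat_has_derivative_0 by (simp add: exp_flat_def)
  qed
qed

lemma smooth_real_exp_flat: "smooth_real (exp_flat p)"
  by (rule smooth_realI[of _ "range exp_flat"]) (auto intro: exp_flat_has_derivative)

lemma exp_flat_1: "exp_flat 1 t = (if t > 0 then exp (- inverse t) else 0)"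
  by (simp add: exp_flat_def)

definition smooth_step :: "real \<Rightarrow> real" where
  "smooth_step t = exp_flat 1 t / (exp_flat 1 t + exp_flat 1 (1 - t))"

lemma smooth_step_denominator_pos: "exp_flat 1 t + exp_flat 1 (1 - t) > 0"
  by (cases "t > 0") (auto simp: exp_flat_1 add_pos_nonneg add_nonneg_pos)

lemma smooth_real_smooth_step: "smooth_real smooth_step"
proof -
  let ?E = "exp_flat 1"
  have E: "?E \<in> smooth_algebra" by (rule smooth_algebra.smooth[OF smooth_real_exp_flat])
  have "(\<lambda>t. ?E t + ?E ((- 1) * t + 1)) \<in> smooth_algebra"
    by (rule smooth_algebra.add[OF E smooth_algebra.affine[OF E]])
  then have "(\<lambda>t. ?E t * inverse (?E t + ?E ((- 1) * t + 1))) \<in> smooth_algebra"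
    using smooth_step_denominator_pos
    by (intro smooth_algebra.mult[OF E] smooth_algebra.inverse) (auto simp: less_imp_neq[symmetric])
  then show ?thesis
    by (auto dest!: smooth_algebra_smooth simp: smooth_step_def[abs_def] divide_inverse)
qed

lemma smooth_step_eq_0: "t \<le> 0 \<Longrightarrow> smooth_step t = 0"
  by (simp add: smooth_step_def exp_flat_1)

lemma smooth_step_eq_1: "t \<ge> 1 \<Longrightarrow> smooth_step t = 1"
  by (simp add: smooth_step_def exp_flat_1)

lemma smooth_step_bounds: "0 \<le> smooth_step t \<and> smooth_step t \<le> 1"
  using smooth_step_denominator_pos[of t]
  by (auto simp: smooth_step_def exp_flat_1 divide_le_eq_1 split: if_splits)

definition coord_prod :: "('a::euclidean_space \<Rightarrow> real \<Rightarrow> real) \<Rightarrow> 'a \<Rightarrow> real" where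
  "coord_prod G x = (\<Prod>i\<in>Basis. G i (x \<bullet> i))"

lemma coord_prod_has_derivative:
  fixes G G' :: "'a::euclidean_space \<Rightarrow> real \<Rightarrow> real"
  assumes "\<And>i t. i \<in> Basis \<Longrightarrow> (G i has_real_derivative G' i t) (at t)"
  shows "(coord_prod G has_derivative
     (\<lambda>y. \<Sum>i\<in>Basis. (G' i (x \<bullet> i) * (y \<bullet> i)) * (\<Prod>j\<in>Basis - {i}. G j (x \<bullet> j)))) (at x)"
  unfolding coord_prod_def
proof (rule has_derivative_prod)
  fix i :: 'a assume i: "i \<in> Basis"
  have "(G i has_derivative (\<lambda>h. G' i (x \<bullet> i) * h)) (at (x \<bullet> i))"
    using assms[OF i] by (simp add: has_field_derivative_def mult_commute_abs)
  with bounded_linear_imp_has_derivative[OF bounded_linear_inner_left]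
  show "((\<lambda>x. G i (x \<bullet> i)) has_derivative (\<lambda>y. G' i (x \<bullet> i) * (y \<bullet> i))) (at x)"
    by (rule has_derivative_compose)
qed

lemma frechet_derivative_coord_prod:
  fixes G G' :: "'a::euclidean_space \<Rightarrow> real \<Rightarrow> real"
  assumes "\<And>i t. i \<in> Basis \<Longrightarrow> (G i has_real_derivative G' i t) (at t)" and j: "j \<in> Basis"
  shows "frechet_derivative (coord_prod G) (at x) j = coord_prod (G(j := G' j)) x"
proof -
  have "frechet_derivative (coord_prod G) (at x) j
      = (\<Sum>i\<in>Basis. (G' i (x \<bullet> i) * (j \<bullet> i)) * (\<Prod>l\<in>Basis - {i}. G l (x \<bullet> l)))"
    by (simp add: frechet_derivative_at[OF coord_prod_has_derivative[OF assms(1)], symmetric])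
  also have "\<dots> = G' j (x \<bullet> j) * (\<Prod>l\<in>Basis - {j}. G l (x \<bullet> l))"
    using j by (simp add: inner_Basis if_distrib if_distribR sum.delta' cong: if_cong)
  also have "(\<Prod>l\<in>Basis - {j}. G l (x \<bullet> l)) = (\<Prod>l\<in>Basis - {j}. (G(j := G' j)) l (x \<bullet> l))"
    by (rule prod.cong) auto
  also have "G' j (x \<bullet> j) * \<dots> = coord_prod (G(j := G' j)) x"
    unfolding coord_prod_def using j by (simp add: prod.remove)
  finally show ?thesis .
qed

lemma smooth_real_family_derivatives:
  assumes "\<forall>i\<in>I. smooth_real (G i)"
  obtains G' where "\<forall>i\<in>I. smooth_real (G' i)" "\<And>i t. i \<in> I \<Longrightarrow> (G i has_real_derivative G' i t) (at t)"
proof -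
  have "\<forall>i\<in>I. \<exists>g'. smooth_real g' \<and> (\<forall>t. (G i has_real_derivative g' t) (at t))"
    using assms by (meson smooth_real_has_derivative)
  then show ?thesis using that by metis
qed

lemma Ck_coord_prod:
  fixes G :: "'a::euclidean_space \<Rightarrow> real \<Rightarrow> real"
  assumes "\<forall>i\<in>Basis. smooth_real (G i)"
  shows "Ck k (coord_prod G)"
  using assms
proof (induction k arbitrary: G)
  case 0
  obtain G' where "\<And>i t. i \<in> Basis \<Longrightarrow> (G i has_real_derivative G' i t) (at t)"
    using smooth_real_family_derivatives[OF "0.prems"] by metis
  then show ?case
    by (auto intro!: has_derivative_continuous_on coord_prod_has_derivative)
next
  case (Suc k)
  obtain G' where G': "\<forall>i\<in>Basis. smooth_real (G' i)"
    "\<And>i t. i \<in> Basis \<Longrightarrow> (G i has_real_derivative G' i t) (at t)"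
    using smooth_real_family_derivatives[OF Suc.prems] by metis
  have "\<forall>x. coord_prod G differentiable (at x)"
    using coord_prod_has_derivative[of G G'] G'(2) unfolding differentiable_def by blast
  moreover have "Ck k (\<lambda>x. frechet_derivative (coord_prod G) (at x) j)" if j: "j \<in> Basis" for j
  proof -
    have "frechet_derivative (coord_prod G) (at x) j = coord_prod (G(j := G' j)) x" for x
      using frechet_derivative_coord_prod[of G G' j x] G'(2) j by blast
    moreover have "Ck k (coord_prod (G(j := G' j)))"
      using Suc.prems G'(1) j by (intro Suc.IH) auto
    ultimately show ?thesis by simp
  qed
  ultimately show ?case by simp
qed

text \<open>A smooth function with values in \<open>[0, 1]\<close> that equals \<open>1\<close> on the points of the box at
  distance at least \<open>2/(k+1)\<close> from its faces and vanishes at distance less than \<open>1/(k+1)\<close>.\<close>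

definition box_cutoff :: "'a::euclidean_space \<Rightarrow> 'a \<Rightarrow> nat \<Rightarrow> 'a \<Rightarrow> real" where
  "box_cutoff a b k = coord_prod (\<lambda>i t.
     smooth_step (real (Suc k) * (t - a \<bullet> i) - 1) * smooth_step (real (Suc k) * (b \<bullet> i - t) - 1))"

lemma Ck_box_cutoff: "Ck n (box_cutoff a b k)"
  unfolding box_cutoff_def
proof (intro Ck_coord_prod ballI)
  fix i :: 'a
  let ?m = "real (Suc k)"
  have S: "smooth_step \<in> smooth_algebra" by (rule smooth_algebra.smooth[OF smooth_real_smooth_step])
  have "(\<lambda>t. smooth_step (?m * t + (- ?m * (a \<bullet> i) - 1)) * smooth_step ((- ?m) * t + (?m * (b \<bullet> i) - 1)))
      \<in> smooth_algebra"
    by (rule smooth_algebra.mult[OF smooth_algebra.affine[OF S] smooth_algebra.affine[OF S]])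
  then show "smooth_real (\<lambda>t. smooth_step (?m * (t - a \<bullet> i) - 1) * smooth_step (?m * (b \<bullet> i - t) - 1))"
    by (auto dest!: smooth_algebra_smooth simp: algebra_simps)
qed

lemma box_cutoff_bounds: "0 \<le> box_cutoff a b k x \<and> box_cutoff a b k x \<le> 1"
  unfolding box_cutoff_def coord_prod_def
  using smooth_step_bounds by (auto intro!: prod_nonneg prod_le_1 mult_le_one)

lemma box_cutoff_nonzero:
  assumes "box_cutoff a b k x \<noteq> 0" "i \<in> Basis"
  shows "a \<bullet> i + 1 / real (Suc k) \<le> x \<bullet> i \<and> x \<bullet> i \<le> b \<bullet> i - 1 / real (Suc k)"
proof -
  have "real (Suc k) * (x \<bullet> i - a \<bullet> i) - 1 > 0" "real (Suc k) * (b \<bullet> i - x \<bullet> i) - 1 > 0"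
    using assms smooth_step_eq_0 unfolding box_cutoff_def coord_prod_def
    by (metis (no_types, lifting) mult_eq_0_iff not_le prod_zero_iff finite_Basis)+
  then show ?thesis by (auto simp: field_simps)
qed

lemma test_fun_box_cutoff:
  assumes "box a b \<subseteq> \<Omega>"
  shows "test_fun \<Omega> (box_cutoff a b k)"
proof -
  define \<delta> where "\<delta> = 1 / real (Suc k)"
  define K where "K = cbox (\<Sum>i\<in>Basis. (a \<bullet> i + \<delta>) *\<^sub>R i) (\<Sum>i\<in>Basis. (b \<bullet> i - \<delta>) *\<^sub>R i)"
  have "closure {x. box_cutoff a b k x \<noteq> 0} \<subseteq> K"
  proof (rule closure_minimal)
    show "{x. box_cutoff a b k x \<noteq> 0} \<subseteq> K"
      using box_cutoff_nonzero[of a b k]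
      by (auto simp: K_def \<delta>_def mem_box inner_sum_left_Basis simp del: of_nat_Suc)
  qed (simp add: K_def closed_cbox)
  moreover have "\<delta> > 0" by (simp add: \<delta>_def)
  then have "K \<subseteq> box a b"
    unfolding K_def by (auto simp: mem_box inner_sum_left_Basis) (smt (verit))+
  moreover have "compact (closure {x. box_cutoff a b k x \<noteq> 0})"
    using calculation(1) unfolding K_def
    by (meson bounded_cbox bounded_subset closed_closure compact_eq_bounded_closed)
  ultimately show ?thesis
    unfolding test_fun_def using assms Ck_box_cutoff by blast
qed

lemma box_cutoff_tendsto_indicator: "(\<lambda>k. box_cutoff a b k x) \<longlonglongrightarrow> indicator (box a b) x"
proof (cases "x \<in> box a b")
  case True
  have "\<forall>\<^sub>F k in sequentially. smooth_step (real (Suc k) * (x \<bullet> i - a \<bullet> i) - 1)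
      * smooth_step (real (Suc k) * (b \<bullet> i - x \<bullet> i) - 1) = 1" if i: "i \<in> Basis" for i
  proof -
    have pos: "x \<bullet> i - a \<bullet> i > 0" "b \<bullet> i - x \<bullet> i > 0" using True i by (auto simp: mem_box)
    obtain n :: nat where n: "real n > max (2 / (x \<bullet> i - a \<bullet> i)) (2 / (b \<bullet> i - x \<bullet> i))"
      using reals_Archimedean2 by blast
    have "real (Suc k) * (x \<bullet> i - a \<bullet> i) - 1 \<ge> 1 \<and> real (Suc k) * (b \<bullet> i - x \<bullet> i) - 1 \<ge> 1"
      if "n \<le> k" for k
    proof -
      have "real (Suc k) > 2 / (x \<bullet> i - a \<bullet> i)" "real (Suc k) > 2 / (b \<bullet> i - x \<bullet> i)"
        using n that by (auto simp del: of_nat_Suc)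
      then show ?thesis using pos by (auto simp: field_simps)
    qed
    then show ?thesis
      unfolding eventually_sequentially by (metis smooth_step_eq_1 mult_1)
  qed
  then have "\<forall>\<^sub>F k in sequentially. \<forall>i\<in>Basis. smooth_step (real (Suc k) * (x \<bullet> i - a \<bullet> i) - 1)
      * smooth_step (real (Suc k) * (b \<bullet> i - x \<bullet> i) - 1) = 1"
    by (intro eventually_ball_finite) auto
  then have "\<forall>\<^sub>F k in sequentially. box_cutoff a b k x = 1"
    by eventually_elim (simp add: box_cutoff_def coord_prod_def)
  then show ?thesis using True by (simp add: tendsto_eventually)
next
  case False
  then obtain i where "i \<in> Basis" "x \<bullet> i \<le> a \<bullet> i \<or> b \<bullet> i \<le> x \<bullet> i"
    by (auto simp: mem_box not_less)
  then have "box_cutoff a b k x = 0" for k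
    using box_cutoff_nonzero[of a b k x i] by (smt (verit) divide_pos_pos of_nat_0_less_iff zero_less_Suc)
  then show ?thesis using False by simp
qed

section \<open>The fundamental lemma of the calculus of variations\<close>

lemma box_integral_eq_0_if_test_integrals_eq_0:
  fixes h :: "'a::euclidean_space \<Rightarrow> real"
  assumes h: "set_integrable lebesgue \<Omega> h"
    and test: "\<And>\<phi>. test_fun \<Omega> \<phi> \<Longrightarrow> (LINT x:\<Omega>|lebesgue. h x * \<phi> x) = 0"
    and box: "box a b \<subseteq> \<Omega>"
  shows "(LINT x:box a b|lebesgue. h x) = 0"
proof -
  let ?H = "\<lambda>x. indicator \<Omega> x *\<^sub>R h x"
  have H: "integrable lebesgue ?H" using h by (simp add: set_integrable_def)
  have cutoff_measurable: "box_cutoff a b k \<in> borel_measurable lborel" for k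
    using Ck_box_cutoff[of 0 a b k] by (auto intro: measurable_completion borel_measurable_continuous_onI)
  have "(\<lambda>k. integral\<^sup>L lebesgue (\<lambda>x. ?H x * box_cutoff a b k x))
      \<longlonglongrightarrow> integral\<^sup>L lebesgue (\<lambda>x. ?H x * indicator (box a b) x)"
  proof (rule integral_dominated_convergence[where w="\<lambda>x. norm (?H x)"])
    show "AE x in lebesgue. norm (?H x * box_cutoff a b k x) \<le> norm (?H x)" for k
      using box_cutoff_bounds[of a b k] by (intro AE_I2) (simp add: abs_mult mult_left_le)
    have "indicator (box a b) \<in> borel_measurable lebesgue"
      by (rule borel_measurable_indicator) simp
    then show "(\<lambda>x. ?H x * indicator (box a b) x) \<in> borel_measurable lebesgue"
      using H by (intro borel_measurable_times) auto
  qed (use H cutoff_measurable[THEN measurable_completion] in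
        \<open>auto intro!: AE_I2 tendsto_mult_left box_cutoff_tendsto_indicator\<close>)
  moreover have "integral\<^sup>L lebesgue (\<lambda>x. ?H x * box_cutoff a b k x) = 0" for k
    using test[OF test_fun_box_cutoff[OF box]] by (simp add: set_lebesgue_integral_def mult.assoc)
  ultimately have "integral\<^sup>L lebesgue (\<lambda>x. ?H x * indicator (box a b) x) = 0"
    by (simp add: LIMSEQ_const_iff)
  moreover have "(\<lambda>x. ?H x * indicator (box a b) x) = (\<lambda>x. indicator (box a b) x *\<^sub>R h x)"
    using box by (force simp: indicator_def)
  ultimately show ?thesis by (simp add: set_lebesgue_integral_def)
qed

lemma nn_integral_ennreal_less_top:
  fixes f :: "'a \<Rightarrow> real"
  assumes "integrable M f"
  shows "(\<integral>\<^sup>+ x. ennreal (f x) \<partial>M) < \<infinity>"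
proof -
  have "(\<integral>\<^sup>+ x. ennreal (f x) \<partial>M) \<le> (\<integral>\<^sup>+ x. ennreal (norm (f x)) \<partial>M)"
    by (intro nn_integral_mono) auto
  also have "\<dots> < \<infinity>" using assms integrable_iff_bounded by blast
  finally show ?thesis by simp
qed

lemma nn_integral_pos_eq_neg_if_integral_eq_0:
  fixes f :: "'a \<Rightarrow> real"
  assumes "integrable M f" "integral\<^sup>L M f = 0"
  shows "(\<integral>\<^sup>+ x. ennreal (f x) \<partial>M) = (\<integral>\<^sup>+ x. ennreal (- f x) \<partial>M)"
proof -
  have "(\<integral>\<^sup>+ x. ennreal (f x) \<partial>M) = ennreal (enn2real (\<integral>\<^sup>+ x. ennreal (f x) \<partial>M))"
    using nn_integral_ennreal_less_top[OF assms(1)] by simp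
  also have "enn2real (\<integral>\<^sup>+ x. ennreal (f x) \<partial>M) = enn2real (\<integral>\<^sup>+ x. ennreal (- f x) \<partial>M)"
    using assms real_lebesgue_integral_def[OF assms(1)] by simp
  also have "ennreal \<dots> = (\<integral>\<^sup>+ x. ennreal (- f x) \<partial>M)"
    using nn_integral_ennreal_less_top[of M "\<lambda>x. - f x"] assms(1) by simp
  finally show ?thesis .
qed

lemma emeasure_density_pos_eq_neg_if_set_integral_eq_0:
  fixes f :: "'a \<Rightarrow> real"
  assumes f: "integrable M f" and X: "X \<in> sets M" and zero: "(LINT x:X|M. f x) = 0"
  shows "emeasure (density M (\<lambda>x. ennreal (f x))) X = emeasure (density M (\<lambda>x. ennreal (- f x))) X"
proof -
  have "integrable M (\<lambda>x. indicator X x * f x)"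
    using integrable_mult_indicator[OF X f] by simp
  moreover have "integral\<^sup>L M (\<lambda>x. indicator X x * f x) = 0"
    using zero by (simp add: set_lebesgue_integral_def)
  ultimately have "(\<integral>\<^sup>+ x. ennreal (indicator X x * f x) \<partial>M) = (\<integral>\<^sup>+ x. ennreal (- (indicator X x * f x)) \<partial>M)"
    by (rule nn_integral_pos_eq_neg_if_integral_eq_0)
  moreover have "emeasure (density M (\<lambda>x. ennreal (g x))) X = (\<integral>\<^sup>+ x. ennreal (indicator X x * g x) \<partial>M)"
    if "g \<in> borel_measurable M" for g
    using that X by (subst emeasure_density) (auto intro!: nn_integral_cong simp: indicator_def)
  ultimately show ?thesis using borel_measurable_integrable[OF f] by simp
qed

lemma ennreal_eq_ennreal_uminus_iff: "ennreal y = ennreal (- y) \<longleftrightarrow> y = 0"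
  by (cases "0 \<le> y") (auto simp: ennreal_eq_0_iff ennreal_neg)

lemma AE_eq_0_if_box_integrals_eq_0:
  fixes f :: "'a::euclidean_space \<Rightarrow> real"
  assumes f: "integrable lborel f" and box: "\<And>a b. (LINT x:box a b|lborel. f x) = 0"
  shows "AE x in lborel. f x = 0"
proof -
  have f_meas: "f \<in> borel_measurable lborel" using f by auto
  define M where "M g = density lborel (\<lambda>x. ennreal (g x))" for g :: "'a \<Rightarrow> real"
  have fin: "(\<integral>\<^sup>+ x. ennreal (f x) \<partial>lborel) < \<infinity>"
    using nn_integral_ennreal_less_top[OF f] by simp
  \<comment> \<open>The densities \<open>max f 0\<close> and \<open>max (- f) 0\<close> give measures that agree on all boxes.\<close>
  have "M f = M (\<lambda>x. - f x)"
  proof (rule measure_eqI_generator_eq[where E="range (\<lambda>(a, b). box a b)" and \<Omega>=UNIV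
        and A="\<lambda>n. box (- (real n *\<^sub>R One)) (real n *\<^sub>R One)"])
    show "Int_stable (range (\<lambda>(a, b). box a b :: 'a set))"
      unfolding Int_stable_def by (auto simp: box_Int_box)
    have "sets borel = sigma_sets UNIV (range (\<lambda>(a, b). box a b :: 'a set))"
      by (subst borel_eq_box) (simp add: sets_measure_of)
    then show "sets (M f) = sigma_sets UNIV (range (\<lambda>(a, b). box a b))"
      "sets (M (\<lambda>x. - f x)) = sigma_sets UNIV (range (\<lambda>(a, b). box a b))"
      by (simp_all add: M_def)
    show "emeasure (M f) X = emeasure (M (\<lambda>x. - f x)) X" if X_box: "X \<in> range (\<lambda>(a, b). box a b)" for X
    proof -
      obtain a b where X: "X = box a b" using X_box by force
      show ?thesis
        unfolding M_def X using f box[of a b] by (intro emeasure_density_pos_eq_neg_if_set_integral_eq_0) auto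
    qed
    show "emeasure (M f) (box (- (real n *\<^sub>R One)) (real n *\<^sub>R One)) \<noteq> \<infinity>" for n
    proof -
      have "emeasure (M f) (box (- (real n *\<^sub>R One)) (real n *\<^sub>R One)) \<le> emeasure (M f) UNIV"
        by (rule emeasure_mono) (auto simp: M_def)
      also have "\<dots> < \<infinity>" using f_meas fin by (simp add: M_def emeasure_density)
      finally show ?thesis by simp
    qed
    show "range (\<lambda>n. box (- (real n *\<^sub>R One)) (real n *\<^sub>R One)) \<subseteq> range (\<lambda>(a, b). box a b)"
      by (auto simp: image_iff intro!: exI[of _ "(_, _)"])
  qed (simp_all add: UN_box_eq_UNIV)
  then have "AE x in lborel. ennreal (f x) = ennreal (- f x)"
    using finite_density_unique[of "\<lambda>x. ennreal (f x)" lborel "\<lambda>x. ennreal (- f x)"] f_meas fin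
    by (simp add: M_def)
  then show ?thesis
    by eventually_elim (simp add: ennreal_eq_ennreal_uminus_iff)
qed

lemma AE_eq_0_on_box_if_box_integrals_eq_0:
  fixes h :: "'a::euclidean_space \<Rightarrow> real"
  assumes h: "set_integrable lebesgue \<Omega> h"
    and box: "\<And>a b. box a b \<subseteq> \<Omega> \<Longrightarrow> (LINT x:box a b|lebesgue. h x) = 0"
    and cd: "box c d \<subseteq> \<Omega>"
  shows "AE x in lebesgue. x \<in> box c d \<longrightarrow> h x = 0"
proof -
  define H where "H x = indicator (box c d) x * h x" for x
  have "integrable lebesgue (\<lambda>x. indicator (box c d) x *\<^sub>R (indicator \<Omega> x * h x))"
    using h by (intro integrable_mult_indicator) (auto simp: set_integrable_def intro: measurable_completion)
  moreover have "indicator (box c d) x *\<^sub>R (indicator \<Omega> x * h x) = H x" for x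
    using cd by (auto simp: H_def indicator_def)
  ultimately have H_int: "integrable lebesgue H" by simp
  then obtain H' where H'_meas: "H' \<in> borel_measurable lborel" and "AE x in lborel. H x = H' x"
    using completion_ex_borel_measurable_real[of H lborel] by auto
  then have HH': "AE x in lebesgue. H x = H' x" by (simp add: AE_completion_iff)
  have H'_meas': "H' \<in> borel_measurable lebesgue" using H'_meas by (rule measurable_completion)
  have "integrable lebesgue H'"
    by (rule integrable_cong_AE_imp[OF H_int H'_meas' HH'])
  then have H'_int: "integrable lborel H'" using integrable_completion[OF H'_meas] by simp
  have "(LINT x:box a b|lborel. H' x) = 0" for a b :: 'a
  proof -
    have box_meas: "indicator (box a b) \<in> borel_measurable lebesgue"
      by (rule borel_measurable_indicator) simp
    have "(LINT x:box a b|lborel. H' x) = (LINT x:box a b|lebesgue. H' x)"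
      using H'_meas by (simp add: set_lebesgue_integral_def integral_completion)
    also have "\<dots> = (LINT x:box a b|lebesgue. H x)"
      unfolding set_lebesgue_integral_def
    proof (rule integral_cong_AE)
      show "AE x in lebesgue. indicator (box a b) x *\<^sub>R H' x = indicator (box a b) x *\<^sub>R H x"
        using HH' by eventually_elim simp
    qed (use box_meas H'_meas' borel_measurable_integrable[OF H_int] in \<open>auto intro: borel_measurable_times\<close>)
    also have "\<dots> = (LINT x:box a b \<inter> box c d|lebesgue. h x)"
      unfolding set_lebesgue_integral_def H_def by (simp add: indicator_inter_arith mult.assoc)
    also have "\<dots> = 0"
      unfolding box_Int_box by (rule box) (use cd box_Int_box[of a b c d] in blast)
    finally show ?thesis .
  qed
  then have "AE x in lborel. H' x = 0" by (rule AE_eq_0_if_box_integrals_eq_0[OF H'_int])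
  then have "AE x in lebesgue. H' x = 0" by (simp add: AE_completion_iff)
  then show ?thesis
    using HH' by eventually_elim (auto simp: H_def)
qed

theorem AE_eq_0_if_test_integrals_eq_0:
  fixes h :: "'a::euclidean_space \<Rightarrow> real"
  assumes "open \<Omega>" and h: "set_integrable lebesgue \<Omega> h"
    and test: "\<And>\<phi>. test_fun \<Omega> \<phi> \<Longrightarrow> (LINT x:\<Omega>|lebesgue. h x * \<phi> x) = 0"
  shows "AE x in lebesgue. x \<in> \<Omega> \<longrightarrow> h x = 0"
proof -
  define lo where "lo f = (\<Sum>i\<in>Basis. fst (f i) *\<^sub>R i)" for f :: "'a \<Rightarrow> real \<times> real"
  define hi where "hi f = (\<Sum>i\<in>Basis. snd (f i) *\<^sub>R i)" for f :: "'a \<Rightarrow> real \<times> real"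
  define I where "I = {f\<in>Basis \<rightarrow>\<^sub>E \<rat> \<times> \<rat>. box (lo f) (hi f) \<subseteq> \<Omega>}"
  have \<Omega>: "\<Omega> = (\<Union>f\<in>I. box (lo f) (hi f))"
    unfolding lo_def hi_def I_def by (rule open_UNION_box[OF \<open>open \<Omega>\<close>])
  have "countable (Basis \<rightarrow>\<^sub>E (\<rat> \<times> \<rat>) :: ('a \<Rightarrow> real \<times> real) set)"
    by (intro countable_PiE finite_Basis countable_SIGMA countable_rat)
  then have "countable I" unfolding I_def by (rule countable_subset[rotated]) auto
  then have "AE x in lebesgue. \<forall>f\<in>I. x \<in> box (lo f) (hi f) \<longrightarrow> h x = 0"
    using AE_eq_0_on_box_if_box_integrals_eq_0[OF h box_integral_eq_0_if_test_integrals_eq_0[OF h test]]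
    by (subst AE_ball_countable') (auto simp: I_def)
  then show ?thesis
    by eventually_elim (use \<Omega> in blast)
qed

section \<open>Square-integrable functions and weak gradients\<close>

lemma set_borel_measurable_iff_restrict_space:
  fixes f :: "'a \<Rightarrow> 'b::real_normed_vector"
  assumes "A \<in> sets M"
  shows "set_borel_measurable M A f \<longleftrightarrow> f \<in> borel_measurable (restrict_space M A)"
  using assms by (simp add: set_borel_measurable_def borel_measurable_restrict_space_iff)

lemma L2_on_zero: "L2_on \<Omega> (\<lambda>x. 0)"
  unfolding L2_on_def set_borel_measurable_def by simp

context
  fixes \<Omega> :: "'a::euclidean_space set"
  assumes \<Omega>_open: "open \<Omega>" and \<Omega>_bounded: "bounded \<Omega>"
begin

lemma lmeasurable_domain: "\<Omega> \<in> lmeasurable"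
  using lmeasurable_open[OF \<Omega>_bounded \<Omega>_open] .

lemma sets_lebesgue_domain: "\<Omega> \<in> sets lebesgue"
  using lmeasurable_domain by (simp add: fmeasurable_def)

lemma L2_on_borel_measurable: "L2_on \<Omega> u \<Longrightarrow> u \<in> borel_measurable (lebesgue_on \<Omega>)"
  unfolding L2_on_def using set_borel_measurable_iff_restrict_space[OF sets_lebesgue_domain] by blast

lemma L2_on_iff:
  "L2_on \<Omega> u \<longleftrightarrow> u \<in> borel_measurable (lebesgue_on \<Omega>) \<and> set_integrable lebesgue \<Omega> (\<lambda>x. (u x)\<^sup>2)"
  unfolding L2_on_def using set_borel_measurable_iff_restrict_space[OF sets_lebesgue_domain] by blast

lemma L2_on_mult_set_integrable:
  assumes "L2_on \<Omega> u" "L2_on \<Omega> v"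
  shows "set_integrable lebesgue \<Omega> (\<lambda>x. u x * v x)"
proof (rule set_integrable_bound)
  show "set_integrable lebesgue \<Omega> (\<lambda>x. (u x)\<^sup>2 + (v x)\<^sup>2)"
    using assms unfolding L2_on_def by (intro set_integral_add) auto
  show "set_borel_measurable lebesgue \<Omega> (\<lambda>x. u x * v x)"
    unfolding set_borel_measurable_iff_restrict_space[OF sets_lebesgue_domain]
    using assms by (intro borel_measurable_times L2_on_borel_measurable)
  have "norm (u x * v x) \<le> norm ((u x)\<^sup>2 + (v x)\<^sup>2)" for x
  proof -
    have "2 * (\<bar>u x\<bar> * \<bar>v x\<bar>) \<le> (u x)\<^sup>2 + (v x)\<^sup>2"
      using sum_squares_bound[of "\<bar>u x\<bar>" "\<bar>v x\<bar>"] by (simp add: power2_eq_square)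
    moreover have "0 \<le> \<bar>u x\<bar> * \<bar>v x\<bar>" by simp
    ultimately have "\<bar>u x\<bar> * \<bar>v x\<bar> \<le> (u x)\<^sup>2 + (v x)\<^sup>2" by linarith
    then show ?thesis by (simp add: abs_mult)
  qed
  then show "AE x in lebesgue. x \<in> \<Omega> \<longrightarrow> norm (u x * v x) \<le> norm ((u x)\<^sup>2 + (v x)\<^sup>2)"
    by simp
qed

lemma L2_on_set_integrable:
  assumes "L2_on \<Omega> u"
  shows "set_integrable lebesgue \<Omega> u"
proof (rule set_integrable_bound)
  show "set_integrable lebesgue \<Omega> (\<lambda>x. 1 + (u x)\<^sup>2)"
    using assms lmeasurable_domain unfolding L2_on_def set_integrable_def
    by (intro set_integral_add[unfolded set_integrable_def] integrable_indicator) (auto simp: fmeasurable_def)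
  have "\<bar>t\<bar> \<le> 1 + t\<^sup>2" for t :: real
    using sum_squares_bound[of "\<bar>t\<bar>" 1] by (simp add: power2_eq_square)
  then show "AE x in lebesgue. x \<in> \<Omega> \<longrightarrow> norm (u x) \<le> norm (1 + (u x)\<^sup>2)"
    by simp
qed (use assms in \<open>simp add: L2_on_def\<close>)

lemma L2_on_add: "L2_on \<Omega> u \<Longrightarrow> L2_on \<Omega> v \<Longrightarrow> L2_on \<Omega> (\<lambda>x. u x + v x)"
proof -
  assume u: "L2_on \<Omega> u" and v: "L2_on \<Omega> v"
  have "set_integrable lebesgue \<Omega> (\<lambda>x. (u x)\<^sup>2 + (v x)\<^sup>2 + 2 * (u x * v x))"
    using u v L2_on_mult_set_integrable[OF u v] unfolding L2_on_def by auto
  moreover have "(\<lambda>x. (u x)\<^sup>2 + (v x)\<^sup>2 + 2 * (u x * v x)) = (\<lambda>x. (u x + v x)\<^sup>2)"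
    by (auto simp: power2_eq_square algebra_simps)
  moreover have "(\<lambda>x. u x + v x) \<in> borel_measurable (lebesgue_on \<Omega>)"
    using u v by (intro borel_measurable_add L2_on_borel_measurable)
  ultimately show ?thesis by (simp add: L2_on_iff)
qed

lemma L2_on_scale:
  assumes "L2_on \<Omega> u"
  shows "L2_on \<Omega> (\<lambda>x. c * u x)"
proof -
  have "(\<lambda>x. c * u x) \<in> borel_measurable (lebesgue_on \<Omega>)"
    using assms by (intro borel_measurable_times borel_measurable_const L2_on_borel_measurable)
  moreover have "set_integrable lebesgue \<Omega> (\<lambda>x. c\<^sup>2 * (u x)\<^sup>2)"
    using assms unfolding L2_on_def by (intro set_integrable_mult_right) auto
  ultimately show ?thesis by (simp add: L2_on_iff power_mult_distrib)
qed

lemma set_integrable_mult_continuous: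
  fixes \<psi> :: "'a \<Rightarrow> real"
  assumes u: "set_integrable lebesgue \<Omega> u" and \<psi>: "continuous_on UNIV \<psi>"
  shows "set_integrable lebesgue \<Omega> (\<lambda>x. u x * \<psi> x)"
proof -
  have "compact (\<psi> ` closure \<Omega>)"
    using \<Omega>_bounded by (intro compact_continuous_image continuous_on_subset[OF \<psi>]) (auto simp: compact_closure)
  then obtain C where C: "\<And>x. x \<in> \<Omega> \<Longrightarrow> \<bar>\<psi> x\<bar> \<le> C"
    using closure_subset by (fastforce dest!: compact_imp_bounded simp: bounded_iff)
  show ?thesis
  proof (rule set_integrable_bound)
    show "set_integrable lebesgue \<Omega> (\<lambda>x. C * u x)" using u by (rule set_integrable_mult_right)
    have "\<psi> \<in> borel_measurable lborel"
      using \<psi> by (auto intro: borel_measurable_continuous_onI)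
    then have "\<psi> \<in> borel_measurable (lebesgue_on \<Omega>)"
      by (intro measurable_restrict_space1 measurable_completion)
    moreover have "(\<lambda>x. indicator \<Omega> x *\<^sub>R u x) \<in> borel_measurable lebesgue"
      using u unfolding set_integrable_def by (rule borel_measurable_integrable)
    then have "u \<in> borel_measurable (lebesgue_on \<Omega>)"
      by (simp add: borel_measurable_restrict_space_iff sets_lebesgue_domain)
    ultimately show "set_borel_measurable lebesgue \<Omega> (\<lambda>x. u x * \<psi> x)"
      unfolding set_borel_measurable_iff_restrict_space[OF sets_lebesgue_domain]
      by (intro borel_measurable_times)
    have "norm (u x * \<psi> x) \<le> norm (C * u x)" if "x \<in> \<Omega>" for x
    proof -
      have "\<bar>u x\<bar> * \<bar>\<psi> x\<bar> \<le> \<bar>u x\<bar> * C" using C[OF that] by (rule mult_left_mono) simp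
      moreover have "C \<ge> 0" using C[OF that] by linarith
      ultimately show ?thesis by (simp add: abs_mult mult.commute)
    qed
    then show "AE x in lebesgue. x \<in> \<Omega> \<longrightarrow> norm (u x * \<psi> x) \<le> norm (C * u x)"
      by simp
  qed
qed

end

lemma set_lebesgue_integral_cong_AE_set_measurable:
  fixes f g :: "'a \<Rightarrow> real"
  assumes "set_borel_measurable M A f" "set_borel_measurable M A g" "AE x in M. x \<in> A \<longrightarrow> f x = g x"
  shows "(LINT x:A|M. f x) = (LINT x:A|M. g x)"
  unfolding set_lebesgue_integral_def
  by (rule integral_cong_AE) (use assms in \<open>auto simp: set_borel_measurable_def indicator_def\<close>)

lemma set_lebesgue_integral_nonneg_AE:
  fixes f :: "'a \<Rightarrow> real"
  assumes "AE x in M. x \<in> A \<longrightarrow> 0 \<le> f x"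
  shows "0 \<le> (LINT x:A|M. f x)"
  unfolding set_lebesgue_integral_def
  by (rule integral_nonneg_AE) (use assms in \<open>eventually_elim, auto simp: indicator_def\<close>)

lemma set_integrable_imp_set_borel_measurable:
  fixes f :: "'a \<Rightarrow> real"
  shows "set_integrable M A f \<Longrightarrow> set_borel_measurable M A f"
  unfolding set_integrable_def set_borel_measurable_def by auto

definition H1 :: "'a::euclidean_space set \<Rightarrow> ('a \<Rightarrow> real) set" where
  "H1 \<Omega> = {u. L2_on \<Omega> u \<and> (\<exists>g. weak_grad \<Omega> u g)}"

lemma H10_subset_H1: "H10 \<Omega> \<subseteq> H1 \<Omega>"
  unfolding H10_def H1_def by blast

lemma H1_L2_on: "u \<in> H1 \<Omega> \<Longrightarrow> L2_on \<Omega> u"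
  unfolding H1_def by blast

lemma weak_grad_wgrad: "u \<in> H1 \<Omega> \<Longrightarrow> weak_grad \<Omega> u (wgrad \<Omega> u)"
  unfolding H1_def wgrad_def using someI_ex[of "weak_grad \<Omega> u"] by blast

lemma weak_grad_L2_on: "weak_grad \<Omega> u g \<Longrightarrow> i \<in> Basis \<Longrightarrow> L2_on \<Omega> (\<lambda>x. g x \<bullet> i)"
  unfolding weak_grad_def by blast

lemma test_fun_continuous: "test_fun \<Omega> \<phi> \<Longrightarrow> continuous_on UNIV \<phi>"
  unfolding test_fun_def by (metis Ck.simps(1))

lemma test_fun_grad_continuous:
  "test_fun \<Omega> \<phi> \<Longrightarrow> i \<in> Basis \<Longrightarrow> continuous_on UNIV (\<lambda>x. grad \<phi> x \<bullet> i)"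
  unfolding test_fun_def grad_def by (simp add: inner_sum_left_Basis) (metis Ck.simps One_nat_def)

context
  fixes \<Omega> :: "'a::euclidean_space set"
  assumes \<Omega>_open: "open \<Omega>" and \<Omega>_bounded: "bounded \<Omega>"
begin

lemma set_integrable_L2_on_mult_test_fun:
  "L2_on \<Omega> u \<Longrightarrow> test_fun \<Omega> \<phi> \<Longrightarrow> set_integrable lebesgue \<Omega> (\<lambda>x. u x * \<phi> x)"
  by (intro set_integrable_mult_continuous[OF \<Omega>_open \<Omega>_bounded] L2_on_set_integrable[OF \<Omega>_open \<Omega>_bounded]
      test_fun_continuous)

lemma set_integrable_L2_on_mult_test_fun_grad:
  "L2_on \<Omega> u \<Longrightarrow> test_fun \<Omega> \<phi> \<Longrightarrow> i \<in> Basis \<Longrightarrow>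
     set_integrable lebesgue \<Omega> (\<lambda>x. u x * (grad \<phi> x \<bullet> i))"
  by (intro set_integrable_mult_continuous[OF \<Omega>_open \<Omega>_bounded] L2_on_set_integrable[OF \<Omega>_open \<Omega>_bounded]
      test_fun_grad_continuous)

lemma weak_grad_add:
  assumes u: "L2_on \<Omega> u" and v: "L2_on \<Omega> v" and g: "weak_grad \<Omega> u g" and g': "weak_grad \<Omega> v g'"
  shows "weak_grad \<Omega> (\<lambda>x. u x + v x) (\<lambda>x. g x + g' x)"
  unfolding weak_grad_def
proof (intro conjI ballI allI impI)
  fix i :: 'a assume i: "i \<in> Basis"
  show "L2_on \<Omega> (\<lambda>x. (g x + g' x) \<bullet> i)"
    using weak_grad_L2_on[OF g i] weak_grad_L2_on[OF g' i]
    unfolding inner_add_left by (rule L2_on_add[OF \<Omega>_open \<Omega>_bounded])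
next
  fix \<phi> and i :: 'a assume \<phi>: "test_fun \<Omega> \<phi>" and i: "i \<in> Basis"
  have "(LINT x:\<Omega>|lebesgue. (u x + v x) * (grad \<phi> x \<bullet> i))
      = (LINT x:\<Omega>|lebesgue. u x * (grad \<phi> x \<bullet> i)) + (LINT x:\<Omega>|lebesgue. v x * (grad \<phi> x \<bullet> i))"
    using set_integrable_L2_on_mult_test_fun_grad[OF _ \<phi> i] u v by (simp add: distrib_right)
  also have "\<dots> = - (LINT x:\<Omega>|lebesgue. (g x \<bullet> i) * \<phi> x) - (LINT x:\<Omega>|lebesgue. (g' x \<bullet> i) * \<phi> x)"
    using g g' \<phi> i unfolding weak_grad_def by auto
  also have "\<dots> = - (LINT x:\<Omega>|lebesgue. ((g x + g' x) \<bullet> i) * \<phi> x)"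
    using set_integrable_L2_on_mult_test_fun[OF weak_grad_L2_on[OF g i] \<phi>]
      set_integrable_L2_on_mult_test_fun[OF weak_grad_L2_on[OF g' i] \<phi>]
    by (simp add: inner_add_left distrib_right)
  finally show "(LINT x:\<Omega>|lebesgue. (u x + v x) * (grad \<phi> x \<bullet> i))
      = - (LINT x:\<Omega>|lebesgue. ((g x + g' x) \<bullet> i) * \<phi> x)" .
qed

lemma weak_grad_scale:
  assumes g: "weak_grad \<Omega> u g"
  shows "weak_grad \<Omega> (\<lambda>x. c * u x) (\<lambda>x. c *\<^sub>R g x)"
  using g L2_on_scale[OF \<Omega>_open \<Omega>_bounded] unfolding weak_grad_def by (simp add: mult.assoc)

theorem weak_grad_unique:
  assumes g1: "weak_grad \<Omega> u g1" and g2: "weak_grad \<Omega> u g2"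
  shows "AE x in lebesgue. x \<in> \<Omega> \<longrightarrow> g1 x = g2 x"
proof -
  have "AE x in lebesgue. \<forall>i\<in>Basis. x \<in> \<Omega> \<longrightarrow> g1 x \<bullet> i - g2 x \<bullet> i = 0"
  proof (rule AE_ball_countable'[OF _ countable_finite[OF finite_Basis]])
    fix i :: 'a assume i: "i \<in> Basis"
    note L2 = weak_grad_L2_on[OF g1 i] weak_grad_L2_on[OF g2 i]
    show "AE x in lebesgue. x \<in> \<Omega> \<longrightarrow> g1 x \<bullet> i - g2 x \<bullet> i = 0"
    proof (rule AE_eq_0_if_test_integrals_eq_0[OF \<Omega>_open])
      show "set_integrable lebesgue \<Omega> (\<lambda>x. g1 x \<bullet> i - g2 x \<bullet> i)"
        by (intro set_integral_diff L2_on_set_integrable[OF \<Omega>_open \<Omega>_bounded] L2)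
      fix \<phi> assume \<phi>: "test_fun \<Omega> \<phi>"
      have "(LINT x:\<Omega>|lebesgue. (g1 x \<bullet> i - g2 x \<bullet> i) * \<phi> x)
          = (LINT x:\<Omega>|lebesgue. (g1 x \<bullet> i) * \<phi> x) - (LINT x:\<Omega>|lebesgue. (g2 x \<bullet> i) * \<phi> x)"
        using set_integrable_L2_on_mult_test_fun[OF L2(1) \<phi>] set_integrable_L2_on_mult_test_fun[OF L2(2) \<phi>]
        by (simp add: left_diff_distrib)
      also have "\<dots> = 0"
        using g1 g2 \<phi> i unfolding weak_grad_def by (metis diff_self minus_equation_iff)
      finally show "(LINT x:\<Omega>|lebesgue. (g1 x \<bullet> i - g2 x \<bullet> i) * \<phi> x) = 0" .
    qed
  qed
  then show ?thesis
    by eventually_elim (auto intro: euclidean_eqI)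
qed

lemma weak_grad_zero_if_AE_zero:
  assumes u: "L2_on \<Omega> u" and zero: "AE x in lebesgue. x \<in> \<Omega> \<longrightarrow> u x = 0"
  shows "weak_grad \<Omega> u (\<lambda>x. 0)"
  unfolding weak_grad_def
proof (intro conjI ballI allI impI)
  fix \<phi> and i :: 'a assume \<phi>: "test_fun \<Omega> \<phi>" and i: "i \<in> Basis"
  have "(LINT x:\<Omega>|lebesgue. u x * (grad \<phi> x \<bullet> i)) = (LINT x:\<Omega>|lebesgue. 0)"
    using set_integrable_L2_on_mult_test_fun_grad[OF u \<phi> i] zero
    by (intro set_lebesgue_integral_cong_AE_set_measurable set_integrable_imp_set_borel_measurable)
       (auto simp: set_borel_measurable_def elim!: eventually_mono)
  then show "(LINT x:\<Omega>|lebesgue. u x * (grad \<phi> x \<bullet> i)) = - (LINT x:\<Omega>|lebesgue. (0 \<bullet> i) * \<phi> x)"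
    by simp
qed (simp add: L2_on_zero)

lemma H1_add: "u \<in> H1 \<Omega> \<Longrightarrow> v \<in> H1 \<Omega> \<Longrightarrow> (\<lambda>x. u x + v x) \<in> H1 \<Omega>"
  unfolding H1_def using L2_on_add[OF \<Omega>_open \<Omega>_bounded] weak_grad_add by blast

lemma H1_scale: "u \<in> H1 \<Omega> \<Longrightarrow> (\<lambda>x. c * u x) \<in> H1 \<Omega>"
  unfolding H1_def using L2_on_scale[OF \<Omega>_open \<Omega>_bounded] weak_grad_scale by blast

lemma H1_zero: "(\<lambda>x. 0) \<in> H1 \<Omega>"
  unfolding H1_def using L2_on_zero weak_grad_zero_if_AE_zero[OF L2_on_zero] by auto

end

section \<open>The two bilinear forms\<close>

lemma l2ip_sym: "l2ip \<Omega> f g = l2ip \<Omega> g f"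
  unfolding l2ip_def by (simp add: mult.commute)

lemma l2ip_nonneg: "0 \<le> l2ip \<Omega> f f"
  unfolding l2ip_def by (rule set_lebesgue_integral_nonneg_AE) simp

lemma l2ip_scale_left: "l2ip \<Omega> (\<lambda>x. c * f x) h = c * l2ip \<Omega> f h"
  unfolding l2ip_def by (simp add: mult.assoc)

lemma aform_sym: "aform \<Omega> \<kappa> f g = aform \<Omega> \<kappa> g f"
  unfolding aform_def by (simp add: inner_commute)

lemma aform_nonneg:
  assumes "AE x in lebesgue. x \<in> \<Omega> \<longrightarrow> 0 \<le> \<kappa> x"
  shows "0 \<le> aform \<Omega> \<kappa> u u"
  unfolding aform_def by (rule set_lebesgue_integral_nonneg_AE) (use assms in \<open>eventually_elim, auto\<close>)

lemma set_integrable_mult_Linf_on: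
  fixes f :: "'a::euclidean_space \<Rightarrow> real"
  assumes \<kappa>: "Linf_on \<Omega> \<kappa>" and f: "set_integrable lebesgue \<Omega> f"
  shows "set_integrable lebesgue \<Omega> (\<lambda>x. \<kappa> x * f x)"
proof -
  obtain C where C: "AE x in lebesgue. x \<in> \<Omega> \<longrightarrow> \<bar>\<kappa> x\<bar> \<le> C" using \<kappa> unfolding Linf_on_def by blast
  show ?thesis
  proof (rule set_integrable_bound)
    show "set_integrable lebesgue \<Omega> (\<lambda>x. C * f x)" using f by (rule set_integrable_mult_right)
    have "(\<lambda>x. indicator \<Omega> x *\<^sub>R \<kappa> x) \<in> borel_measurable lebesgue"
      using \<kappa> unfolding Linf_on_def set_borel_measurable_def by blast
    moreover have "(\<lambda>x. indicator \<Omega> x *\<^sub>R f x) \<in> borel_measurable lebesgue"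
      using f unfolding set_integrable_def by (rule borel_measurable_integrable)
    ultimately have "(\<lambda>x. (indicator \<Omega> x *\<^sub>R \<kappa> x) * (indicator \<Omega> x *\<^sub>R f x)) \<in> borel_measurable lebesgue"
      by (rule borel_measurable_times)
    then show "set_borel_measurable lebesgue \<Omega> (\<lambda>x. \<kappa> x * f x)"
      unfolding set_borel_measurable_def by (rule measurable_cong[THEN iffD1, rotated]) (simp add: indicator_def)
    show "AE x in lebesgue. x \<in> \<Omega> \<longrightarrow> norm (\<kappa> x * f x) \<le> norm (C * f x)"
      using C
    proof eventually_elim
      case (elim x)
      then show ?case by (auto simp: abs_mult intro: mult_right_mono)
    qed
  qed
qed

context
  fixes \<Omega> :: "'a::euclidean_space set"
  assumes \<Omega>_open: "open \<Omega>" and \<Omega>_bounded: "bounded \<Omega>"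
begin

lemma l2ip_add_left:
  "L2_on \<Omega> f \<Longrightarrow> L2_on \<Omega> g \<Longrightarrow> L2_on \<Omega> h \<Longrightarrow> l2ip \<Omega> (\<lambda>x. f x + g x) h = l2ip \<Omega> f h + l2ip \<Omega> g h"
  unfolding l2ip_def using L2_on_mult_set_integrable[OF \<Omega>_open \<Omega>_bounded]
  by (simp add: distrib_right set_integral_add(2))

lemma AE_zero_if_l2ip_eq_0:
  assumes f: "L2_on \<Omega> f" and zero: "l2ip \<Omega> f f = 0"
  shows "AE x in lebesgue. x \<in> \<Omega> \<longrightarrow> f x = 0"
proof -
  have int: "integrable lebesgue (\<lambda>x. indicator \<Omega> x *\<^sub>R (f x * f x))"
    using L2_on_mult_set_integrable[OF \<Omega>_open \<Omega>_bounded f f] by (simp add: set_integrable_def)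
  have "integral\<^sup>L lebesgue (\<lambda>x. indicator \<Omega> x *\<^sub>R (f x * f x)) = 0"
    using zero by (simp add: l2ip_def set_lebesgue_integral_def)
  then have "AE x in lebesgue. indicator \<Omega> x *\<^sub>R (f x * f x) = 0"
    using integral_nonneg_eq_0_iff_AE[OF int] by (simp add: indicator_def)
  then show ?thesis by eventually_elim (auto simp: indicator_def)
qed

lemma set_integrable_inner_weak_grads:
  assumes "weak_grad \<Omega> u g" "weak_grad \<Omega> v g'"
  shows "set_integrable lebesgue \<Omega> (\<lambda>x. g x \<bullet> g' x)"
proof -
  have "set_integrable lebesgue \<Omega> (\<lambda>x. \<Sum>b\<in>Basis. (g x \<bullet> b) * (g' x \<bullet> b))"
    unfolding set_integrable_def scaleR_sum_right
    using L2_on_mult_set_integrable[OF \<Omega>_open \<Omega>_bounded weak_grad_L2_on[OF assms(1)] weak_grad_L2_on[OF assms(2)]]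
    by (intro Bochner_Integration.integrable_sum) (simp add: set_integrable_def)
  then show ?thesis by (simp add: euclidean_inner[of "g _" "g' _"])
qed

context
  fixes \<kappa> :: "'a \<Rightarrow> real"
  assumes \<kappa>_Linf: "Linf_on \<Omega> \<kappa>"
begin

lemma aform_eq_weak_grad_integral:
  assumes u: "u \<in> H1 \<Omega>" and g: "weak_grad \<Omega> u g" and w: "w \<in> H1 \<Omega>"
  shows "aform \<Omega> \<kappa> u w = (LINT x:\<Omega>|lebesgue. \<kappa> x * (g x \<bullet> wgrad \<Omega> w x))"
  unfolding aform_def
proof (rule set_lebesgue_integral_cong_AE_set_measurable)
  show "set_borel_measurable lebesgue \<Omega> (\<lambda>x. \<kappa> x * (wgrad \<Omega> u x \<bullet> wgrad \<Omega> w x))"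
    "set_borel_measurable lebesgue \<Omega> (\<lambda>x. \<kappa> x * (g x \<bullet> wgrad \<Omega> w x))"
    using weak_grad_wgrad[OF u] weak_grad_wgrad[OF w] g
    by (intro set_integrable_imp_set_borel_measurable set_integrable_mult_Linf_on[OF \<kappa>_Linf]
        set_integrable_inner_weak_grads; blast)+
  show "AE x in lebesgue. x \<in> \<Omega> \<longrightarrow> \<kappa> x * (wgrad \<Omega> u x \<bullet> wgrad \<Omega> w x) = \<kappa> x * (g x \<bullet> wgrad \<Omega> w x)"
    using weak_grad_unique[OF \<Omega>_open \<Omega>_bounded weak_grad_wgrad[OF u] g] by eventually_elim simp
qed

lemma aform_add_left:
  assumes u: "u \<in> H1 \<Omega>" and v: "v \<in> H1 \<Omega>" and w: "w \<in> H1 \<Omega>"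
  shows "aform \<Omega> \<kappa> (\<lambda>x. u x + v x) w = aform \<Omega> \<kappa> u w + aform \<Omega> \<kappa> v w"
proof -
  note grads = weak_grad_wgrad[OF u] weak_grad_wgrad[OF v] weak_grad_wgrad[OF w]
  have "aform \<Omega> \<kappa> (\<lambda>x. u x + v x) w
      = (LINT x:\<Omega>|lebesgue. \<kappa> x * ((wgrad \<Omega> u x + wgrad \<Omega> v x) \<bullet> wgrad \<Omega> w x))"
    using u v w grads H1_L2_on
    by (intro aform_eq_weak_grad_integral H1_add[OF \<Omega>_open \<Omega>_bounded] weak_grad_add[OF \<Omega>_open \<Omega>_bounded])
  also have "\<dots> = aform \<Omega> \<kappa> u w + aform \<Omega> \<kappa> v w"
    unfolding aform_def inner_add_left distrib_left
    using grads by (intro set_integral_add(2) set_integrable_mult_Linf_on[OF \<kappa>_Linf]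
        set_integrable_inner_weak_grads)
  finally show ?thesis .
qed

lemma aform_scale_left:
  assumes u: "u \<in> H1 \<Omega>" and w: "w \<in> H1 \<Omega>"
  shows "aform \<Omega> \<kappa> (\<lambda>x. c * u x) w = c * aform \<Omega> \<kappa> u w"
proof -
  have "aform \<Omega> \<kappa> (\<lambda>x. c * u x) w = (LINT x:\<Omega>|lebesgue. \<kappa> x * ((c *\<^sub>R wgrad \<Omega> u x) \<bullet> wgrad \<Omega> w x))"
    using u w by (intro aform_eq_weak_grad_integral H1_scale[OF \<Omega>_open \<Omega>_bounded]
        weak_grad_scale[OF \<Omega>_open \<Omega>_bounded] weak_grad_wgrad)
  also have "\<dots> = c * aform \<Omega> \<kappa> u w"
    unfolding aform_def by (simp add: mult.left_commute)
  finally show ?thesis .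
qed

lemma aform_eq_0_if_l2ip_eq_0:
  assumes u: "u \<in> H1 \<Omega>" and zero: "l2ip \<Omega> u u = 0"
  shows "aform \<Omega> \<kappa> u u = 0"
proof -
  have "weak_grad \<Omega> u (\<lambda>x. 0)"
    using weak_grad_zero_if_AE_zero[OF \<Omega>_open \<Omega>_bounded H1_L2_on[OF u]]
      AE_zero_if_l2ip_eq_0[OF H1_L2_on[OF u] zero] .
  then show ?thesis using aform_eq_weak_grad_integral[OF u _ u] by simp
qed

end

end

section \<open>Positive semidefinite symmetric bilinear forms on function spaces\<close>

lemma fun_subspace_diff:
  assumes "fun_subspace V" "f \<in> V" "g \<in> V"
  shows "(\<lambda>x. f x - g x) \<in> V"
proof -
  have add: "\<And>u v. u \<in> V \<Longrightarrow> v \<in> V \<Longrightarrow> (\<lambda>x. u x + v x) \<in> V"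
    and neg: "(\<lambda>x. (- 1) * g x) \<in> V"
    using assms unfolding fun_subspace_def by blast+
  show ?thesis using add[OF assms(2) neg] by simp
qed

definition fun_span :: "('a \<Rightarrow> real) set \<Rightarrow> ('a \<Rightarrow> real) set" where
  "fun_span S = {(\<lambda>x. \<Sum>b\<in>S. c b * b x) | c. True}"

lemma fin_dim_fun_spaceE:
  assumes "fin_dim_fun_space V"
  obtains S where "finite S" "S \<subseteq> V" "V = fun_span S"
  using assms unfolding fin_dim_fun_space_def fun_span_def by blast

locale psd_form =
  fixes W :: "('a \<Rightarrow> real) set" and B :: "('a \<Rightarrow> real) \<Rightarrow> ('a \<Rightarrow> real) \<Rightarrow> real"
  assumes subspace: "fun_subspace W"
    and sym: "B f g = B g f"
    and add_left: "f \<in> W \<Longrightarrow> g \<in> W \<Longrightarrow> h \<in> W \<Longrightarrow> B (\<lambda>x. f x + g x) h = B f h + B g h"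
    and scale_left: "f \<in> W \<Longrightarrow> h \<in> W \<Longrightarrow> B (\<lambda>x. c * f x) h = c * B f h"
    and nonneg: "f \<in> W \<Longrightarrow> 0 \<le> B f f"
begin

lemma zero_mem: "(\<lambda>x. 0) \<in> W"
  and add_mem: "f \<in> W \<Longrightarrow> g \<in> W \<Longrightarrow> (\<lambda>x. f x + g x) \<in> W"
  and scale_mem: "f \<in> W \<Longrightarrow> (\<lambda>x. c * f x) \<in> W"
  using subspace unfolding fun_subspace_def by blast+

lemma diff_mem: "f \<in> W \<Longrightarrow> g \<in> W \<Longrightarrow> (\<lambda>x. f x - g x) \<in> W"
  by (rule fun_subspace_diff[OF subspace])

lemma sum_mem: "(\<And>k::nat. k < m \<Longrightarrow> e k \<in> W) \<Longrightarrow> (\<lambda>x. \<Sum>k<m. c k * e k x) \<in> W"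
  by (induction m) (simp_all add: zero_mem add_mem scale_mem)

lemma zero_left: "h \<in> W \<Longrightarrow> B (\<lambda>x. 0) h = 0"
  using scale_left[OF zero_mem, of h 0] by simp

lemma add_right: "f \<in> W \<Longrightarrow> g \<in> W \<Longrightarrow> h \<in> W \<Longrightarrow> B h (\<lambda>x. f x + g x) = B h f + B h g"
  using add_left by (simp add: sym[of h])

lemma scale_right: "f \<in> W \<Longrightarrow> h \<in> W \<Longrightarrow> B h (\<lambda>x. c * f x) = c * B h f"
  using scale_left by (simp add: sym[of h])

lemma diff_left:
  assumes "f \<in> W" "g \<in> W" "h \<in> W"
  shows "B (\<lambda>x. f x - g x) h = B f h - B g h"
proof -
  have "B (\<lambda>x. f x + (- 1) * g x) h = B f h + B (\<lambda>x. (- 1) * g x) h"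
    using assms by (intro add_left scale_mem)
  then show ?thesis using scale_left[OF assms(2,3), of "- 1"] by simp
qed

lemma diff_right: "f \<in> W \<Longrightarrow> g \<in> W \<Longrightarrow> h \<in> W \<Longrightarrow> B h (\<lambda>x. f x - g x) = B h f - B h g"
  using diff_left by (simp add: sym[of h])

lemma sum_left:
  "(\<And>k::nat. k < m \<Longrightarrow> e k \<in> W) \<Longrightarrow> h \<in> W \<Longrightarrow> B (\<lambda>x. \<Sum>k<m. c k * e k x) h = (\<Sum>k<m. c k * B (e k) h)"
  by (induction m) (simp_all add: zero_left add_left scale_left sum_mem scale_mem)

lemmas bilinear = add_left add_right scale_left scale_right diff_left diff_right

lemma quadratic_expansion:
  assumes "f \<in> W" "g \<in> W"
  shows "B (\<lambda>x. f x + t * g x) (\<lambda>x. f x + t * g x) = B f f + 2 * t * B f g + t\<^sup>2 * B g g"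
  using assms by (simp add: bilinear add_mem scale_mem sym[of g f] power2_eq_square algebra_simps)

theorem cauchy_schwarz:
  assumes f: "f \<in> W" and g: "g \<in> W"
  shows "(B f g)\<^sup>2 \<le> B f f * B g g"
proof -
  have nonneg_quadratic: "0 \<le> B f f + 2 * t * B f g + t\<^sup>2 * B g g" for t
    using nonneg[OF add_mem[OF f scale_mem[OF g]]] quadratic_expansion[OF f g] by simp
  show ?thesis
  proof (cases "B g g = 0")
    case True
    have "B f g = 0"
    proof (rule ccontr)
      assume "B f g \<noteq> 0"
      then have "B f f + 2 * (- (B f f + 1) / (2 * B f g)) * B f g + (- (B f f + 1) / (2 * B f g))\<^sup>2 * B g g = -1"
        using True by (simp add: field_simps)
      then show False using nonneg_quadratic by (metis neg_0_le_iff_le not_one_le_zero)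
    qed
    then show ?thesis using True by simp
  next
    case False
    then have pos: "B g g > 0" using nonneg[OF g] by simp
    have "0 \<le> B f f + 2 * (- B f g / B g g) * B f g + (- B f g / B g g)\<^sup>2 * B g g"
      by (rule nonneg_quadratic)
    also have "\<dots> = B f f - (B f g)\<^sup>2 / B g g" using pos by (simp add: power2_eq_square)
    finally show ?thesis using pos by (simp add: field_simps)
  qed
qed

definition seminorm :: "('a \<Rightarrow> real) \<Rightarrow> real" where
  "seminorm f = sqrt (B f f)"

lemma seminorm_nonneg: "f \<in> W \<Longrightarrow> 0 \<le> seminorm f"
  unfolding seminorm_def using nonneg by simp

lemma seminorm_square: "f \<in> W \<Longrightarrow> (seminorm f)\<^sup>2 = B f f"
  unfolding seminorm_def using nonneg by simp

lemma abs_le_seminorm_mult: "f \<in> W \<Longrightarrow> g \<in> W \<Longrightarrow> \<bar>B f g\<bar> \<le> seminorm f * seminorm g"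
  unfolding seminorm_def using real_sqrt_le_mono[OF cauchy_schwarz] nonneg by (simp add: real_sqrt_mult)

lemma null_left: "f \<in> W \<Longrightarrow> g \<in> W \<Longrightarrow> B f f = 0 \<Longrightarrow> B f g = 0"
  using abs_le_seminorm_mult[of f g] by (simp add: seminorm_def)

lemma seminorm_add: "f \<in> W \<Longrightarrow> g \<in> W \<Longrightarrow> seminorm (\<lambda>x. f x + g x) \<le> seminorm f + seminorm g"
proof -
  assume f: "f \<in> W" and g: "g \<in> W"
  have "(seminorm (\<lambda>x. f x + g x))\<^sup>2 = (seminorm f)\<^sup>2 + 2 * B f g + (seminorm g)\<^sup>2"
    using quadratic_expansion[OF f g, of 1] by (simp add: seminorm_square f g add_mem)
  also have "\<dots> \<le> (seminorm f + seminorm g)\<^sup>2"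
    using abs_le_seminorm_mult[OF f g] by (simp add: power2_eq_square algebra_simps)
  finally show ?thesis
    using seminorm_nonneg f g by (simp add: power2_le_iff_abs_le add_nonneg_nonneg)
qed

lemma seminorm_scale:
  assumes "f \<in> W"
  shows "seminorm (\<lambda>x. c * f x) = \<bar>c\<bar> * seminorm f"
proof -
  have "B (\<lambda>x. c * f x) (\<lambda>x. c * f x) = c\<^sup>2 * B f f"
    using assms by (simp add: scale_left scale_right scale_mem power2_eq_square)
  then show ?thesis unfolding seminorm_def by (simp add: real_sqrt_mult)
qed

lemma seminorm_sum:
  "(\<And>k::nat. k < m \<Longrightarrow> e k \<in> W) \<Longrightarrow> seminorm (\<lambda>x. \<Sum>k<m. c k * e k x) \<le> (\<Sum>k<m. \<bar>c k\<bar> * seminorm (e k))"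
proof (induction m)
  case 0
  then show ?case by (simp add: seminorm_def zero_left zero_mem)
next
  case (Suc m)
  have "seminorm (\<lambda>x. (\<Sum>k<m. c k * e k x) + c m * e m x)
      \<le> seminorm (\<lambda>x. \<Sum>k<m. c k * e k x) + seminorm (\<lambda>x. c m * e m x)"
    using Suc.prems by (intro seminorm_add sum_mem scale_mem) auto
  then show ?case using Suc by (simp add: seminorm_scale)
qed

lemma set_sum_mem: "finite S \<Longrightarrow> S \<subseteq> W \<Longrightarrow> (\<lambda>x. \<Sum>b\<in>S. c b * b x) \<in> W"
  by (induction S rule: finite_induct) (simp_all add: zero_mem add_mem scale_mem)

lemma fun_span_subset: "finite S \<Longrightarrow> S \<subseteq> W \<Longrightarrow> fun_span S \<subseteq> W"
  unfolding fun_span_def using set_sum_mem by blast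

lemma null_add:
  assumes "f \<in> W" "g \<in> W" "B f f = 0" "B g g = 0"
  shows "B (\<lambda>x. f x + g x) (\<lambda>x. f x + g x) = 0"
  using quadratic_expansion[OF assms(1,2), of 1] null_left[OF assms(1,2,3)] assms(3,4) by simp

lemma null_scale: "f \<in> W \<Longrightarrow> B f f = 0 \<Longrightarrow> B (\<lambda>x. c * f x) (\<lambda>x. c * f x) = 0"
  by (simp add: scale_left scale_right scale_mem)

definition orthonormal :: "(nat \<Rightarrow> 'a \<Rightarrow> real) \<Rightarrow> nat \<Rightarrow> bool" where
  "orthonormal e m \<longleftrightarrow> (\<forall>k<m. e k \<in> W) \<and> (\<forall>j<m. \<forall>k<m. B (e j) (e k) = (if j = k then 1 else 0))"

definition in_span_mod_null :: "(nat \<Rightarrow> 'a \<Rightarrow> real) \<Rightarrow> nat \<Rightarrow> ('a \<Rightarrow> real) \<Rightarrow> bool" where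
  "in_span_mod_null e m v \<longleftrightarrow> (\<exists>c n. n \<in> W \<and> B n n = 0 \<and> v = (\<lambda>x. (\<Sum>k<m. c k * e k x) + n x))"

lemma in_span_mod_null_zero: "in_span_mod_null e m (\<lambda>x. 0)"
  unfolding in_span_mod_null_def by (intro exI[of _ "\<lambda>k. 0"] exI[of _ "\<lambda>x. 0"]) (simp add: zero_mem zero_left)

lemma in_span_mod_null_lincomb:
  assumes e: "\<forall>k<m. e k \<in> W" and v: "in_span_mod_null e m v" and w: "in_span_mod_null e m w"
  shows "in_span_mod_null e m (\<lambda>x. t * v x + w x)"
proof -
  obtain c n where n: "n \<in> W" "B n n = 0" and v_eq: "v = (\<lambda>x. (\<Sum>k<m. c k * e k x) + n x)"
    using v unfolding in_span_mod_null_def by blast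
  obtain d n' where n': "n' \<in> W" "B n' n' = 0" and w_eq: "w = (\<lambda>x. (\<Sum>k<m. d k * e k x) + n' x)"
    using w unfolding in_span_mod_null_def by blast
  show ?thesis
    unfolding in_span_mod_null_def
  proof (intro exI conjI)
    show "(\<lambda>x. t * n x + n' x) \<in> W" using n n' by (intro add_mem scale_mem)
    show "B (\<lambda>x. t * n x + n' x) (\<lambda>x. t * n x + n' x) = 0"
      using n n' by (intro null_add null_scale scale_mem)
    show "(\<lambda>x. t * v x + w x) = (\<lambda>x. (\<Sum>k<m. (t * c k + d k) * e k x) + (t * n x + n' x))"
      unfolding v_eq w_eq by (simp add: distrib_left distrib_right sum.distrib sum_distrib_left mult.assoc add_ac)
  qed
qed

lemma in_span_mod_null_extend:
  assumes "in_span_mod_null e m v" "m \<le> m'" "\<forall>k<m. e' k = e k"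
  shows "in_span_mod_null e' m' v"
proof -
  obtain c n where n: "n \<in> W" "B n n = 0" and v_eq: "v = (\<lambda>x. (\<Sum>k<m. c k * e k x) + n x)"
    using assms(1) unfolding in_span_mod_null_def by blast
  have "(\<Sum>k<m'. (if k < m then c k else 0) * e' k x) = (\<Sum>k<m. c k * e k x)" for x
    using assms(2,3) by (subst sum.mono_neutral_right[of "{..<m'}" "{..<m}"]) auto
  then show ?thesis
    unfolding in_span_mod_null_def v_eq using n by (intro exI[of _ "\<lambda>k. if k < m then c k else 0"] exI[of _ n]) auto
qed

lemma orthonormal_sum_delta:
  assumes "orthonormal e m" "j < m"
  shows "(\<Sum>k<m. c k * B (e k) (e j)) = c j"
proof -
  have "(\<Sum>k<m. c k * B (e k) (e j)) = (\<Sum>k<m. if k = j then c k else 0)"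
    using assms unfolding orthonormal_def by (intro sum.cong) auto
  then show ?thesis using assms(2) by simp
qed

lemma orthonormal_residual:
  assumes e: "orthonormal e m" and b: "b \<in> W" and j: "j < m"
  shows "B (\<lambda>x. b x - (\<Sum>k<m. B b (e k) * e k x)) (e j) = 0"
proof -
  have e_mem: "\<And>k. k < m \<Longrightarrow> e k \<in> W" using e unfolding orthonormal_def by blast
  have "B (\<lambda>x. b x - (\<Sum>k<m. B b (e k) * e k x)) (e j) = B b (e j) - (\<Sum>k<m. B b (e k) * B (e k) (e j))"
    using b e_mem j by (simp add: diff_left sum_mem sum_left)
  also have "(\<Sum>k<m. B b (e k) * B (e k) (e j)) = B b (e j)"
    using e j by (rule orthonormal_sum_delta)
  finally show ?thesis by simp
qed

lemma orthonormal_extend: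
  assumes e: "orthonormal e m" and u: "u \<in> W" "B u u = 1" "\<And>j. j < m \<Longrightarrow> B u (e j) = 0"
  shows "orthonormal (e(m := u)) (Suc m)"
proof -
  have "B (e j) u = 0" if "j < m" for j using u(3)[OF that] by (simp add: sym)
  then have "B ((e(m := u)) j) ((e(m := u)) k) = (if j = k then 1 else 0)" if "j < Suc m" "k < Suc m" for j k
    using e u that unfolding orthonormal_def by (cases "j = m"; cases "k = m") (simp_all add: less_Suc_eq)
  moreover have "(e(m := u)) k \<in> W" if "k < Suc m" for k
    using e u that unfolding orthonormal_def by (auto simp: less_Suc_eq)
  ultimately show ?thesis unfolding orthonormal_def by blast
qed

lemma gram_schmidt_step:
  assumes e: "orthonormal e m" and b: "b \<in> W"
  obtains e' m' where "orthonormal e' m'" "m \<le> m'" "\<forall>k<m. e' k = e k" "in_span_mod_null e' m' b"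
proof -
  have e_mem: "\<And>k. k < m \<Longrightarrow> e k \<in> W" using e unfolding orthonormal_def by blast
  define r where "r x = b x - (\<Sum>k<m. B b (e k) * e k x)" for x
  have r: "r \<in> W" unfolding r_def[abs_def] using b e_mem by (intro diff_mem sum_mem)
  have b_eq: "b = (\<lambda>x. (\<Sum>k<m. B b (e k) * e k x) + r x)" by (simp add: r_def)
  show ?thesis
  proof (cases "B r r = 0")
    case True
    then have "in_span_mod_null e m b"
      unfolding in_span_mod_null_def using r b_eq
      by (intro exI[of _ "\<lambda>k. B b (e k)"] exI[of _ r]) simp
    then show ?thesis using that[OF e order_refl] by simp
  next
    case False
    define s where "s = sqrt (B r r)"
    have s: "s > 0" "s * s = B r r" using False nonneg[OF r] by (auto simp: s_def)
    define u where "u = (\<lambda>x. (1 / s) * r x)"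
    have u: "u \<in> W" unfolding u_def using r by (rule scale_mem)
    define e' where "e' = e(m := u)"
    have "B u u = (1 / s) * ((1 / s) * B r r)"
      unfolding u_def by (simp only: scale_left[OF r scale_mem[OF r]] scale_right[OF r r])
    also have "\<dots> = 1" using s False by (simp add: field_simps)
    finally have "B u u = 1" .
    moreover have "B u (e j) = 0" if "j < m" for j
    proof -
      have "B r (e j) = 0"
        using orthonormal_residual[OF e b that] by (simp add: r_def[abs_def])
      then show ?thesis using scale_left[OF r e_mem[OF that], of "1 / s"] by (simp add: u_def)
    qed
    ultimately have "orthonormal e' (Suc m)" unfolding e'_def using e u by (intro orthonormal_extend)
    moreover have "in_span_mod_null e' (Suc m) b"
      unfolding in_span_mod_null_def
    proof (intro exI conjI)
      have "r x = s * u x" for x using s by (simp add: u_def)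
      moreover have "(\<Sum>k<m. (if k = m then s else B b (e k)) * e' k x) = (\<Sum>k<m. B b (e k) * e k x)" for x
        by (intro sum.cong) (auto simp: e'_def)
      ultimately show "b = (\<lambda>x. (\<Sum>k<Suc m. (if k = m then s else B b (e k)) * e' k x) + 0)"
        by (subst b_eq) (simp add: e'_def)
    qed (simp_all add: zero_mem zero_left)
    ultimately show ?thesis using that[of e' "Suc m"] by (simp add: e'_def)
  qed
qed

theorem gram_schmidt:
  assumes "finite S" "S \<subseteq> W"
  obtains e m where "orthonormal e m" "\<forall>b\<in>S. in_span_mod_null e m b"
  using assms
proof (induction S arbitrary: thesis rule: finite_induct)
  case empty
  show ?case by (rule empty.prems(1)[of _ 0]) (simp_all add: orthonormal_def)
next
  case (insert b S)
  have S_W: "S \<subseteq> W" and b: "b \<in> W" using insert.prems(2) by auto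
  obtain e m where e: "orthonormal e m" and S: "\<forall>b\<in>S. in_span_mod_null e m b"
    by (rule insert.IH) (use S_W in auto)
  obtain e' m' where e': "orthonormal e' m'" "m \<le> m'" "\<forall>k<m. e' k = e k" "in_span_mod_null e' m' b"
    by (rule gram_schmidt_step[OF e b])
  have "\<forall>b\<in>S. in_span_mod_null e' m' b"
    using S in_span_mod_null_extend[OF _ e'(2,3)] by blast
  with e' show ?case by (intro insert.prems(1)[of e' m']) auto
qed

lemma in_span_mod_null_fun_span:
  assumes e: "orthonormal e m" and S: "finite S" "\<forall>b\<in>S. in_span_mod_null e m b"
    and v: "v \<in> fun_span S"
  shows "in_span_mod_null e m v"
proof -
  have e_mem: "\<forall>k<m. e k \<in> W" using e unfolding orthonormal_def by blast
  have "in_span_mod_null e m (\<lambda>x. \<Sum>b\<in>S. c b * b x)" for c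
    using S by (induction S rule: finite_induct)
      (simp_all add: in_span_mod_null_zero in_span_mod_null_lincomb[OF e_mem])
  then show ?thesis using v unfolding fun_span_def by blast
qed

lemma orthonormal_coefficient:
  assumes e: "orthonormal e m" and n: "n \<in> W" "B n n = 0" and j: "j < m"
  shows "B (\<lambda>x. (\<Sum>k<m. c k * e k x) + n x) (e j) = c j"
proof -
  have e_mem: "\<And>k. k < m \<Longrightarrow> e k \<in> W" using e unfolding orthonormal_def by blast
  have "B (\<lambda>x. (\<Sum>k<m. c k * e k x) + n x) (e j) = (\<Sum>k<m. c k * B (e k) (e j))"
    using n e_mem j null_left[OF n(1) e_mem n(2)] by (simp add: add_left sum_mem sum_left)
  also have "\<dots> = c j"
    using e j by (rule orthonormal_sum_delta)
  finally show ?thesis .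
qed

theorem seminorm_bound_on_fun_span:
  assumes A: "psd_form W A" and null: "\<And>n. n \<in> W \<Longrightarrow> B n n = 0 \<Longrightarrow> A n n = 0"
    and S: "finite S" "S \<subseteq> W"
  obtains C where "\<And>v. v \<in> fun_span S \<Longrightarrow> psd_form.seminorm A v \<le> C * seminorm v"
proof -
  interpret A: psd_form W A by (rule A)
  obtain e m where e: "orthonormal e m" and S_rep: "\<forall>b\<in>S. in_span_mod_null e m b"
    using gram_schmidt[OF S] by blast
  have e_mem: "\<And>k. k < m \<Longrightarrow> e k \<in> W" using e unfolding orthonormal_def by blast
  have "A.seminorm v \<le> (\<Sum>k<m. A.seminorm (e k)) * seminorm v" if v: "v \<in> fun_span S" for v
  proof -
    obtain c n where n: "n \<in> W" "B n n = 0" and v_eq: "v = (\<lambda>x. (\<Sum>k<m. c k * e k x) + n x)"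
      using in_span_mod_null_fun_span[OF e S(1) S_rep v] unfolding in_span_mod_null_def by blast
    have v_mem: "v \<in> W" using fun_span_subset[OF S] v by blast
    have coefficient_bound: "\<bar>c k\<bar> \<le> seminorm v" if k: "k < m" for k
    proof -
      have "c k = B v (e k)" using orthonormal_coefficient[OF e n k] v_eq by simp
      moreover have "seminorm (e k) = 1" using e k by (simp add: orthonormal_def seminorm_def)
      ultimately show ?thesis using abs_le_seminorm_mult[OF v_mem e_mem[OF k]] by simp
    qed
    have "A.seminorm v \<le> A.seminorm (\<lambda>x. \<Sum>k<m. c k * e k x) + A.seminorm n"
      unfolding v_eq using e_mem n by (intro A.seminorm_add sum_mem)
    also have "A.seminorm n = 0" using null[OF n] by (simp add: A.seminorm_def)
    also have "A.seminorm (\<lambda>x. \<Sum>k<m. c k * e k x) \<le> (\<Sum>k<m. \<bar>c k\<bar> * A.seminorm (e k))"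
      using e_mem by (rule A.seminorm_sum)
    also have "\<dots> \<le> (\<Sum>k<m. seminorm v * A.seminorm (e k))"
      using coefficient_bound e_mem A.seminorm_nonneg by (intro sum_mono mult_right_mono) auto
    also have "\<dots> = (\<Sum>k<m. A.seminorm (e k)) * seminorm v"
      by (simp add: sum_distrib_left mult_ac)
    finally show ?thesis by simp
  qed
  then show ?thesis using that by blast
qed

end

text \<open>The supremum of an unbounded set of reals is unspecified and \<open>x / 0 = 0\<close>; the lemmas
  below supply the boundedness that makes these constants meaningful.\<close>

definition max_cosine ::
  "(('a \<Rightarrow> real) \<Rightarrow> ('a \<Rightarrow> real) \<Rightarrow> real) \<Rightarrow> ('a \<Rightarrow> real) set \<Rightarrow> ('a \<Rightarrow> real) set \<Rightarrow> real" where
  "max_cosine B V1 V2 = Sup {B v1 v2 / (sqrt (B v1 v1) * sqrt (B v2 v2)) | v1 v2. v1 \<in> V1 \<and> v2 \<in> V2}"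

definition max_ratio ::
  "(('a \<Rightarrow> real) \<Rightarrow> ('a \<Rightarrow> real) \<Rightarrow> real) \<Rightarrow> (('a \<Rightarrow> real) \<Rightarrow> ('a \<Rightarrow> real) \<Rightarrow> real) \<Rightarrow>
     ('a \<Rightarrow> real) set \<Rightarrow> real" where
  "max_ratio A B V = Sup {sqrt (A v v) / sqrt (B v v) | v. v \<in> V}"

context psd_form
begin

lemma cosine_le_1:
  assumes "f \<in> W" "g \<in> W"
  shows "B f g / (sqrt (B f f) * sqrt (B g g)) \<le> 1"
proof (cases "sqrt (B f f) * sqrt (B g g) = 0")
  case False
  then have "0 < sqrt (B f f) * sqrt (B g g)" using assms nonneg by (simp add: less_le)
  moreover have "B f g \<le> sqrt (B f f) * sqrt (B g g)"
    using abs_le_seminorm_mult[OF assms] by (simp add: seminorm_def)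
  ultimately show ?thesis by (simp add: divide_le_eq_1)
qed auto

lemma bdd_above_cosines:
  "V1 \<subseteq> W \<Longrightarrow> V2 \<subseteq> W \<Longrightarrow>
     bdd_above {B v1 v2 / (sqrt (B v1 v1) * sqrt (B v2 v2)) | v1 v2. v1 \<in> V1 \<and> v2 \<in> V2}"
  by (rule bdd_aboveI[of _ 1]) (auto intro: cosine_le_1)

lemma le_max_cosine:
  assumes V: "V1 \<subseteq> W" "V2 \<subseteq> W" and v: "v1 \<in> V1" "v2 \<in> V2"
  shows "B v1 v2 \<le> max_cosine B V1 V2 * sqrt (B v1 v1) * sqrt (B v2 v2)"
proof (cases "sqrt (B v1 v1) * sqrt (B v2 v2) = 0")
  case True
  then have "B v1 v2 = 0" using null_left[of v1 v2] null_left[of v2 v1] sym[of v2 v1] V v by auto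
  moreover have "max_cosine B V1 V2 * sqrt (B v1 v1) * sqrt (B v2 v2) = 0" using True by (simp add: mult.assoc)
  ultimately show ?thesis by linarith
next
  case False
  moreover have "0 \<le> B v1 v1" "0 \<le> B v2 v2" using V v nonneg by auto
  ultimately have pos: "0 < sqrt (B v1 v1) * sqrt (B v2 v2)" by (simp add: less_le)
  have "B v1 v2 / (sqrt (B v1 v1) * sqrt (B v2 v2)) \<le> max_cosine B V1 V2"
    unfolding max_cosine_def using V v by (intro cSup_upper bdd_above_cosines) blast+
  then show ?thesis using pos by (simp add: divide_le_eq mult.assoc)
qed

lemma abs_le_max_cosine:
  assumes V: "V1 \<subseteq> W" "V2 \<subseteq> W" "fun_subspace V2" and v: "v1 \<in> V1" "v2 \<in> V2"
  shows "\<bar>B v1 v2\<bar> \<le> max_cosine B V1 V2 * sqrt (B v1 v1) * sqrt (B v2 v2)"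
proof -
  have neg: "(\<lambda>x. (- 1) * v2 x) \<in> V2" using V(3) v(2) unfolding fun_subspace_def by blast
  have w: "v1 \<in> W" "v2 \<in> W" using V v by auto
  have "- B v1 v2 \<le> max_cosine B V1 V2 * sqrt (B v1 v1) * sqrt (B v2 v2)"
    using le_max_cosine[OF V(1,2) v(1) neg] scale_right[OF w(2) w(1), of "- 1"]
      scale_left[OF w(2) scale_mem[OF w(2), of "- 1"], of "- 1"] scale_right[OF w(2) w(2), of "- 1"]
    by simp
  then show ?thesis using le_max_cosine[OF V(1,2) v] by linarith
qed

lemma max_cosine_nonneg:
  assumes "V1 \<subseteq> W" "V2 \<subseteq> W" "(\<lambda>x. 0) \<in> V1" "(\<lambda>x. 0) \<in> V2"
  shows "0 \<le> max_cosine B V1 V2"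
proof -
  have "B (\<lambda>x. 0) (\<lambda>x. 0) / (sqrt (B (\<lambda>x. 0) (\<lambda>x. 0)) * sqrt (B (\<lambda>x. 0) (\<lambda>x. 0)))
      \<le> max_cosine B V1 V2"
    unfolding max_cosine_def using assms by (intro cSup_upper bdd_above_cosines) blast+
  then show ?thesis by (simp add: zero_left zero_mem)
qed

lemma le_max_ratio:
  assumes A: "psd_form W A" and null: "\<And>n. n \<in> W \<Longrightarrow> B n n = 0 \<Longrightarrow> A n n = 0"
    and S: "finite S" "S \<subseteq> W" and V: "V \<subseteq> fun_span S" and v: "v \<in> V"
  shows "A v v \<le> (max_ratio A B V)\<^sup>2 * B v v"
proof -
  interpret A: psd_form W A by (rule A)
  obtain C where C: "\<And>v. v \<in> fun_span S \<Longrightarrow> A.seminorm v \<le> C * seminorm v"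
    using seminorm_bound_on_fun_span[OF A null S] by blast
  have V_W: "V \<subseteq> W" using V fun_span_subset[OF S] by blast
  have bdd: "bdd_above {sqrt (A v v) / sqrt (B v v) | v. v \<in> V}"
    unfolding bdd_above_def
  proof (intro exI[of _ "max C 0"] ballI)
    fix r assume "r \<in> {sqrt (A v v) / sqrt (B v v) | v. v \<in> V}"
    then obtain w where r: "r = sqrt (A w w) / sqrt (B w w)" and w: "w \<in> V" by blast
    have "sqrt (A w w) \<le> C * sqrt (B w w)"
      using C[of w] V w by (simp add: A.seminorm_def seminorm_def subset_iff)
    show "r \<le> max C 0"
    proof (cases "B w w = 0")
      case False
      then have "0 < sqrt (B w w)" using nonneg V_W w by (auto simp: less_le)
      then have "r \<le> C" unfolding r using \<open>sqrt (A w w) \<le> C * sqrt (B w w)\<close> by (simp add: divide_le_eq)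
      then show ?thesis by simp
    qed (simp add: r)
  qed
  show ?thesis
  proof (cases "B v v = 0")
    case True
    then show ?thesis using null V_W v by auto
  next
    case False
    then have pos: "0 < sqrt (B v v)" using V_W v nonneg by (simp add: less_le subset_iff)
    have "sqrt (A v v) / sqrt (B v v) \<le> max_ratio A B V"
      unfolding max_ratio_def using v bdd by (intro cSup_upper) blast+
    then have "sqrt (A v v) \<le> max_ratio A B V * sqrt (B v v)" using pos by (simp add: divide_le_eq)
    then have "(sqrt (A v v))\<^sup>2 \<le> (max_ratio A B V * sqrt (B v v))\<^sup>2"
      using A.nonneg V_W v by (intro power_mono) auto
    then show ?thesis using A.nonneg nonneg V_W v by (simp add: power_mult_distrib subset_iff)
  qed
qed

end

context
  fixes \<Omega> :: "'a::euclidean_space set"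
  assumes \<Omega>_open: "open \<Omega>" and \<Omega>_bounded: "bounded \<Omega>"
begin

lemma fun_subspace_H1: "fun_subspace (H1 \<Omega>)"
  unfolding fun_subspace_def
  using H1_zero[OF \<Omega>_open \<Omega>_bounded] H1_add[OF \<Omega>_open \<Omega>_bounded] H1_scale[OF \<Omega>_open \<Omega>_bounded]
  by simp

lemma psd_form_l2ip: "psd_form (H1 \<Omega>) (l2ip \<Omega>)"
proof
  show "l2ip \<Omega> (\<lambda>x. f x + g x) h = l2ip \<Omega> f h + l2ip \<Omega> g h"
    if "f \<in> H1 \<Omega>" "g \<in> H1 \<Omega>" "h \<in> H1 \<Omega>" for f g h
    using l2ip_add_left[OF \<Omega>_open \<Omega>_bounded H1_L2_on H1_L2_on H1_L2_on] that .
qed (rule fun_subspace_H1 l2ip_sym l2ip_scale_left l2ip_nonneg)+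

lemma psd_form_aform:
  assumes "Linf_on \<Omega> \<kappa>" "AE x in lebesgue. x \<in> \<Omega> \<longrightarrow> 0 \<le> \<kappa> x"
  shows "psd_form (H1 \<Omega>) (aform \<Omega> \<kappa>)"
proof
  show "aform \<Omega> \<kappa> (\<lambda>x. f x + g x) h = aform \<Omega> \<kappa> f h + aform \<Omega> \<kappa> g h"
    if "f \<in> H1 \<Omega>" "g \<in> H1 \<Omega>" "h \<in> H1 \<Omega>" for f g h
    using aform_add_left[OF \<Omega>_open \<Omega>_bounded assms(1)] that .
  show "aform \<Omega> \<kappa> (\<lambda>x. c * f x) h = c * aform \<Omega> \<kappa> f h" if "f \<in> H1 \<Omega>" "h \<in> H1 \<Omega>" for f h c
    using aform_scale_left[OF \<Omega>_open \<Omega>_bounded assms(1)] that .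
qed (rule fun_subspace_H1 aform_sym aform_nonneg[OF assms(2)])+

end

section \<open>The energy argument\<close>

context psd_form
begin

lemma square_sum_ge_of_cosine_bound:
  assumes f: "f \<in> W" and g: "g \<in> W" and cos: "\<bar>B f g\<bar> \<le> \<gamma> * sqrt (B f f) * sqrt (B g g)"
  shows "(1 - \<gamma>\<^sup>2) * B g g \<le> B (\<lambda>x. f x + g x) (\<lambda>x. f x + g x)"
proof -
  define p q where "p = sqrt (B f f)" and "q = sqrt (B g g)"
  have p2: "p\<^sup>2 = B f f" and q2: "q\<^sup>2 = B g g" using nonneg f g by (simp_all add: p_def q_def)
  have "(1 - \<gamma>\<^sup>2) * q\<^sup>2 \<le> (p - \<gamma> * q)\<^sup>2 + (1 - \<gamma>\<^sup>2) * q\<^sup>2" by simp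
  also have "\<dots> = p\<^sup>2 - 2 * (\<gamma> * p * q) + q\<^sup>2" by (simp add: power2_eq_square algebra_simps)
  also have "\<dots> \<le> p\<^sup>2 + 2 * B f g + q\<^sup>2" using cos unfolding p_def q_def by linarith
  also have "\<dots> = B (\<lambda>x. f x + g x) (\<lambda>x. f x + g x)"
    using quadratic_expansion[OF f g, of 1] by (simp add: p2 q2)
  finally show ?thesis by (simp add: q2)
qed

lemma neg_le_of_cosine_bound:
  assumes f: "f \<in> W" and g: "g \<in> W" and cos: "\<bar>B f g\<bar> \<le> \<gamma> * sqrt (B f f) * sqrt (B g g)"
    and \<gamma>: "0 \<le> \<gamma>"
  shows "- B f g \<le> \<gamma> / 2 * (B f f + B g g)"
proof -
  have "2 * (sqrt (B f f) * sqrt (B g g)) \<le> B f f + B g g"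
    using sum_squares_bound[of "sqrt (B f f)" "sqrt (B g g)"] nonneg f g by (simp add: power2_eq_square)
  then have "\<gamma> * (2 * (sqrt (B f f) * sqrt (B g g))) \<le> \<gamma> * (B f f + B g g)"
    by (rule mult_left_mono[OF _ \<gamma>])
  then show ?thesis using cos by (simp add: mult.assoc)
qed

end

definition energy ::
  "(('a \<Rightarrow> real) \<Rightarrow> ('a \<Rightarrow> real) \<Rightarrow> real) \<Rightarrow> (('a \<Rightarrow> real) \<Rightarrow> ('a \<Rightarrow> real) \<Rightarrow> real) \<Rightarrow> real \<Rightarrow>
     (nat \<Rightarrow> 'a \<Rightarrow> real) \<Rightarrow> (nat \<Rightarrow> 'a \<Rightarrow> real) \<Rightarrow> nat \<Rightarrow> real" where
  "energy L A \<tau> u1 u2 n =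
     L (\<lambda>x. (u1 (n+1) x + u2 (n+1) x) - (u1 n x + u2 n x)) (\<lambda>x. (u1 (n+1) x + u2 (n+1) x) - (u1 n x + u2 n x))
     + \<tau>\<^sup>2 / 2 * (A (u1 (n+1)) (u1 (n+1)) + A (u1 n) (u1 n) + A (u2 (n+1)) (u2 (n+1)) + A (u2 n) (u2 n))
     + \<tau>\<^sup>2 * A (u2 (n+1)) (u1 n) + \<tau>\<^sup>2 * A (u1 (n+1)) (u2 n)
     - \<tau>\<^sup>2 / 2 * A (\<lambda>x. u2 (n+1) x - u2 n x) (\<lambda>x. u2 (n+1) x - u2 n x)"

lemma energy_step:
  assumes L: "psd_form W L" and A: "psd_form W A"
    and u_mem: "u1 k \<in> W" "u1 (Suc k) \<in> W" "u1 (Suc (Suc k)) \<in> W"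
      "u2 k \<in> W" "u2 (Suc k) \<in> W" "u2 (Suc (Suc k)) \<in> W"
    and eq1: "L (\<lambda>x. (u1 (Suc k+1) x + u2 (Suc k+1) x) - 2 * (u1 (Suc k) x + u2 (Suc k) x)
                  + (u1 (Suc k-1) x + u2 (Suc k-1) x))
               (\<lambda>x. u1 (Suc k+1) x - u1 (Suc k-1) x)
             + \<tau>\<^sup>2 / 2 * A (\<lambda>x. u1 (Suc k+1) x + u1 (Suc k-1) x + 2 * u2 (Suc k) x)
                 (\<lambda>x. u1 (Suc k+1) x - u1 (Suc k-1) x) = 0"
    and eq2: "L (\<lambda>x. (u1 (Suc k+1) x + u2 (Suc k+1) x) - 2 * (u1 (Suc k) x + u2 (Suc k) x)
                  + (u1 (Suc k-1) x + u2 (Suc k-1) x))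
               (\<lambda>x. u2 (Suc k+1) x - u2 (Suc k-1) x)
             + \<tau>\<^sup>2 * A (\<lambda>x. u1 (Suc k) x + u2 (Suc k) x) (\<lambda>x. u2 (Suc k+1) x - u2 (Suc k-1) x) = 0"
  shows "energy L A \<tau> u1 u2 (Suc k) = energy L A \<tau> u1 u2 k"
proof -
  interpret L: psd_form W L by (rule L)
  interpret A: psd_form W A by (rule A)
  show ?thesis
    using eq1 eq2 u_mem
    by (simp add: energy_def L.bilinear A.bilinear L.add_mem L.diff_mem L.scale_mem L.sym A.sym
        algebra_simps)
qed

lemma energy_lower_bound:
  assumes L: "psd_form W L" and A: "psd_form W A"
    and u_mem: "u1 n \<in> W" "u1 (Suc n) \<in> W" "u2 n \<in> W" "u2 (Suc n) \<in> W"
    and cos_L: "\<bar>L (\<lambda>x. u1 (Suc n) x - u1 n x) (\<lambda>x. u2 (Suc n) x - u2 n x)\<bar>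
        \<le> \<gamma> * sqrt (L (\<lambda>x. u1 (Suc n) x - u1 n x) (\<lambda>x. u1 (Suc n) x - u1 n x))
            * sqrt (L (\<lambda>x. u2 (Suc n) x - u2 n x) (\<lambda>x. u2 (Suc n) x - u2 n x))"
    and cos_A1: "\<bar>A (u1 n) (u2 (Suc n))\<bar> \<le> \<gamma>\<^sub>a * sqrt (A (u1 n) (u1 n)) * sqrt (A (u2 (Suc n)) (u2 (Suc n)))"
    and cos_A2: "\<bar>A (u1 (Suc n)) (u2 n)\<bar> \<le> \<gamma>\<^sub>a * sqrt (A (u1 (Suc n)) (u1 (Suc n))) * sqrt (A (u2 n) (u2 n))"
    and \<gamma>\<^sub>a: "0 \<le> \<gamma>\<^sub>a"
    and inverse: "A (\<lambda>x. u2 (Suc n) x - u2 n x) (\<lambda>x. u2 (Suc n) x - u2 n x)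
        \<le> \<alpha>\<^sup>2 * L (\<lambda>x. u2 (Suc n) x - u2 n x) (\<lambda>x. u2 (Suc n) x - u2 n x)"
  shows "(1 - \<gamma>\<^sup>2 - \<alpha>\<^sup>2 * \<tau>\<^sup>2 / 2) * L (\<lambda>x. u2 (Suc n) x - u2 n x) (\<lambda>x. u2 (Suc n) x - u2 n x)
     + \<tau>\<^sup>2 * (1 - \<gamma>\<^sub>a) / 2 * (A (u1 (Suc n)) (u1 (Suc n)) + A (u1 n) (u1 n)
        + A (u2 (Suc n)) (u2 (Suc n)) + A (u2 n) (u2 n))
     \<le> energy L A \<tau> u1 u2 n"
proof -
  interpret L: psd_form W L by (rule L)
  interpret A: psd_form W A by (rule A)
  define X Y where "X = (\<lambda>x. u1 (Suc n) x - u1 n x)" and "Y = (\<lambda>x. u2 (Suc n) x - u2 n x)"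
  have XY: "X \<in> W" "Y \<in> W" unfolding X_def Y_def using u_mem by (simp_all add: L.diff_mem)
  have D_eq: "(\<lambda>x. (u1 (n+1) x + u2 (n+1) x) - (u1 n x + u2 n x)) = (\<lambda>x. X x + Y x)"
    by (simp add: X_def Y_def algebra_simps)
  have "(1 - \<gamma>\<^sup>2) * L Y Y \<le> L (\<lambda>x. X x + Y x) (\<lambda>x. X x + Y x)"
    using L.square_sum_ge_of_cosine_bound[OF XY] cos_L unfolding X_def Y_def by blast
  then have I1: "0 \<le> L (\<lambda>x. (u1 (n+1) x + u2 (n+1) x) - (u1 n x + u2 n x))
      (\<lambda>x. (u1 (n+1) x + u2 (n+1) x) - (u1 n x + u2 n x)) - (1 - \<gamma>\<^sup>2) * L Y Y"
    unfolding D_eq by simp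
  have "- A (u2 (Suc n)) (u1 n) \<le> \<gamma>\<^sub>a / 2 * (A (u1 n) (u1 n) + A (u2 (Suc n)) (u2 (Suc n)))"
    using A.neg_le_of_cosine_bound[OF u_mem(1,4) cos_A1 \<gamma>\<^sub>a] using A.sym[of "u1 n" "u2 (Suc n)"] by simp
  then have "0 \<le> A (u2 (Suc n)) (u1 n) + \<gamma>\<^sub>a / 2 * (A (u1 n) (u1 n) + A (u2 (Suc n)) (u2 (Suc n)))"
    by linarith
  then have I2: "0 \<le> \<tau>\<^sup>2 * (A (u2 (Suc n)) (u1 n) + \<gamma>\<^sub>a / 2 * (A (u1 n) (u1 n) + A (u2 (Suc n)) (u2 (Suc n))))"
    by simp
  have "- A (u1 (Suc n)) (u2 n) \<le> \<gamma>\<^sub>a / 2 * (A (u1 (Suc n)) (u1 (Suc n)) + A (u2 n) (u2 n))"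
    using A.neg_le_of_cosine_bound[OF u_mem(2,3) cos_A2 \<gamma>\<^sub>a] .
  then have "0 \<le> A (u1 (Suc n)) (u2 n) + \<gamma>\<^sub>a / 2 * (A (u1 (Suc n)) (u1 (Suc n)) + A (u2 n) (u2 n))"
    by linarith
  then have I3: "0 \<le> \<tau>\<^sup>2 * (A (u1 (Suc n)) (u2 n) + \<gamma>\<^sub>a / 2 * (A (u1 (Suc n)) (u1 (Suc n)) + A (u2 n) (u2 n)))"
    by simp
  have I4: "0 \<le> \<tau>\<^sup>2 / 2 * (\<alpha>\<^sup>2 * L Y Y - A Y Y)"
    using inverse unfolding Y_def by simp
  have "energy L A \<tau> u1 u2 n - ((1 - \<gamma>\<^sup>2 - \<alpha>\<^sup>2 * \<tau>\<^sup>2 / 2) * L Y Y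
     + \<tau>\<^sup>2 * (1 - \<gamma>\<^sub>a) / 2 * (A (u1 (Suc n)) (u1 (Suc n)) + A (u1 n) (u1 n)
        + A (u2 (Suc n)) (u2 (Suc n)) + A (u2 n) (u2 n)))
    = (L (\<lambda>x. (u1 (n+1) x + u2 (n+1) x) - (u1 n x + u2 n x)) (\<lambda>x. (u1 (n+1) x + u2 (n+1) x) - (u1 n x + u2 n x))
        - (1 - \<gamma>\<^sup>2) * L Y Y)
      + \<tau>\<^sup>2 * (A (u2 (Suc n)) (u1 n) + \<gamma>\<^sub>a / 2 * (A (u1 n) (u1 n) + A (u2 (Suc n)) (u2 (Suc n))))
      + \<tau>\<^sup>2 * (A (u1 (Suc n)) (u2 n) + \<gamma>\<^sub>a / 2 * (A (u1 (Suc n)) (u1 (Suc n)) + A (u2 n) (u2 n)))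
      + \<tau>\<^sup>2 / 2 * (\<alpha>\<^sup>2 * L Y Y - A Y Y)"
    unfolding energy_def Y_def by (simp add: field_simps)
  then show ?thesis using I1 I2 I3 I4 unfolding Y_def by linarith
qed

theorem energy_bound:
  assumes L: "psd_form W L" and A: "psd_form W A"
    and V: "fun_subspace V1" "fun_subspace V2" "V1 \<subseteq> W" "V2 \<subseteq> W"
    and cos_L: "\<And>v1 v2. v1 \<in> V1 \<Longrightarrow> v2 \<in> V2 \<Longrightarrow> \<bar>L v1 v2\<bar> \<le> \<gamma> * sqrt (L v1 v1) * sqrt (L v2 v2)"
    and cos_A: "\<And>v1 v2. v1 \<in> V1 \<Longrightarrow> v2 \<in> V2 \<Longrightarrow> \<bar>A v1 v2\<bar> \<le> \<gamma>\<^sub>a * sqrt (A v1 v1) * sqrt (A v2 v2)"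
    and \<gamma>\<^sub>a: "0 \<le> \<gamma>\<^sub>a"
    and inverse: "\<And>v. v \<in> V2 \<Longrightarrow> A v v \<le> \<alpha>\<^sup>2 * L v v"
    and N: "1 \<le> N"
    and u1: "\<And>n. n \<le> N \<Longrightarrow> u1 n \<in> V1" and u2: "\<And>n. n \<le> N \<Longrightarrow> u2 n \<in> V2"
    and eq1: "\<And>n w. 1 \<le> n \<Longrightarrow> n \<le> N - 1 \<Longrightarrow> w \<in> V1 \<Longrightarrow>
       L (\<lambda>x. (u1 (n+1) x + u2 (n+1) x) - 2 * (u1 n x + u2 n x) + (u1 (n-1) x + u2 (n-1) x)) w
       + \<tau>\<^sup>2 / 2 * A (\<lambda>x. u1 (n+1) x + u1 (n-1) x + 2 * u2 n x) w = 0"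
    and eq2: "\<And>n w. 1 \<le> n \<Longrightarrow> n \<le> N - 1 \<Longrightarrow> w \<in> V2 \<Longrightarrow>
       L (\<lambda>x. (u1 (n+1) x + u2 (n+1) x) - 2 * (u1 n x + u2 n x) + (u1 (n-1) x + u2 (n-1) x)) w
       + \<tau>\<^sup>2 * A (\<lambda>x. u1 n x + u2 n x) w = 0"
    and n: "n \<le> N - 1"
  shows "(1 - \<gamma>\<^sup>2 - \<alpha>\<^sup>2 * \<tau>\<^sup>2 / 2) * L (\<lambda>x. u2 (Suc n) x - u2 n x) (\<lambda>x. u2 (Suc n) x - u2 n x)
     + \<tau>\<^sup>2 * (1 - \<gamma>\<^sub>a) / 2 * (A (u1 (Suc n)) (u1 (Suc n)) + A (u1 n) (u1 n)
        + A (u2 (Suc n)) (u2 (Suc n)) + A (u2 n) (u2 n))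
     \<le> energy L A \<tau> u1 u2 0"
proof -
  have u_mem: "u1 k \<in> W" "u2 k \<in> W" if "k \<le> N" for k using u1 u2 V that by auto
  have "energy L A \<tau> u1 u2 (Suc k) = energy L A \<tau> u1 u2 k" if k: "Suc k \<le> N - 1" for k
  proof (rule energy_step[OF L A])
    show "u1 k \<in> W" "u1 (Suc k) \<in> W" "u1 (Suc (Suc k)) \<in> W" "u2 k \<in> W" "u2 (Suc k) \<in> W" "u2 (Suc (Suc k)) \<in> W"
      using k by (auto intro!: u_mem)
    show "L (\<lambda>x. (u1 (Suc k+1) x + u2 (Suc k+1) x) - 2 * (u1 (Suc k) x + u2 (Suc k) x)
          + (u1 (Suc k-1) x + u2 (Suc k-1) x)) (\<lambda>x. u1 (Suc k+1) x - u1 (Suc k-1) x)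
        + \<tau>\<^sup>2 / 2 * A (\<lambda>x. u1 (Suc k+1) x + u1 (Suc k-1) x + 2 * u2 (Suc k) x)
          (\<lambda>x. u1 (Suc k+1) x - u1 (Suc k-1) x) = 0"
      using k by (intro eq1 fun_subspace_diff[OF V(1)] u1) auto
    show "L (\<lambda>x. (u1 (Suc k+1) x + u2 (Suc k+1) x) - 2 * (u1 (Suc k) x + u2 (Suc k) x)
          + (u1 (Suc k-1) x + u2 (Suc k-1) x)) (\<lambda>x. u2 (Suc k+1) x - u2 (Suc k-1) x)
        + \<tau>\<^sup>2 * A (\<lambda>x. u1 (Suc k) x + u2 (Suc k) x) (\<lambda>x. u2 (Suc k+1) x - u2 (Suc k-1) x) = 0"
      using k by (intro eq2 fun_subspace_diff[OF V(2)] u2) auto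
  qed
  then have conserved: "energy L A \<tau> u1 u2 k = energy L A \<tau> u1 u2 0" if "k \<le> N - 1" for k
    using that by (induction k) auto
  have n_le: "n \<le> N" "Suc n \<le> N" using n N by auto
  have diffs: "(\<lambda>x. u1 (Suc n) x - u1 n x) \<in> V1" "(\<lambda>x. u2 (Suc n) x - u2 n x) \<in> V2"
    using n_le by (auto intro!: fun_subspace_diff[OF V(1)] fun_subspace_diff[OF V(2)] u1 u2)
  have "(1 - \<gamma>\<^sup>2 - \<alpha>\<^sup>2 * \<tau>\<^sup>2 / 2) * L (\<lambda>x. u2 (Suc n) x - u2 n x) (\<lambda>x. u2 (Suc n) x - u2 n x)
     + \<tau>\<^sup>2 * (1 - \<gamma>\<^sub>a) / 2 * (A (u1 (Suc n)) (u1 (Suc n)) + A (u1 n) (u1 n)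
        + A (u2 (Suc n)) (u2 (Suc n)) + A (u2 n) (u2 n))
     \<le> energy L A \<tau> u1 u2 n"
    using n_le diffs
    by (intro energy_lower_bound[OF L A] u_mem cos_L cos_A \<gamma>\<^sub>a inverse u1 u2)
  then show ?thesis using conserved[OF n] by simp
qed

lemma l2norm_square: "(l2norm \<Omega> f)\<^sup>2 = l2ip \<Omega> f f"
  by (simp add: l2norm_def l2ip_nonneg)

lemma anorm_square:
  "AE x in lebesgue. x \<in> \<Omega> \<longrightarrow> 0 \<le> \<kappa> x \<Longrightarrow> (anorm \<Omega> \<kappa> f)\<^sup>2 = aform \<Omega> \<kappa> f f"
  by (simp add: anorm_def aform_nonneg)

lemma subset_fun_sum_space:
  assumes "fun_subspace V1" "fun_subspace V2"
  shows "V1 \<subseteq> fun_sum_space V1 V2" "V2 \<subseteq> fun_sum_space V1 V2"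
proof -
  have "(\<lambda>x. 0) \<in> V1" "(\<lambda>x. 0) \<in> V2" using assms unfolding fun_subspace_def by blast+
  then show "V1 \<subseteq> fun_sum_space V1 V2" "V2 \<subseteq> fun_sum_space V1 V2"
    unfolding fun_sum_space_def by force+
qed

theorem mainTheorem2:
  fixes \<Omega> :: "'a::euclidean_space set"
    and \<kappa> :: "'a \<Rightarrow> real" and \<kappa>0 :: real
    and VH VH1 VH2 :: "('a \<Rightarrow> real) set"
    and \<gamma> \<gamma>a \<alpha> \<tau> :: real and N :: nat
    and u1 u2 :: "nat \<Rightarrow> 'a \<Rightarrow> real"
  assumes dom: "bounded_domain \<Omega>"
    and kappa_Linf: "Linf_on \<Omega> \<kappa>"
    and kappa_lb: "\<kappa>0 > 0" "AE x in lebesgue. x \<in> \<Omega> \<longrightarrow> \<kappa> x \<ge> \<kappa>0"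
    and VH_fd: "fin_dim_fun_space VH" and VH_sub: "VH \<subseteq> H10 \<Omega>"
    and VH1_sub: "fun_subspace VH1" and VH2_sub: "fun_subspace VH2"
    and VH_sum: "VH = fun_sum_space VH1 VH2"
    and gamma_def: "\<gamma> = Sup {l2ip \<Omega> v1 v2 / (l2norm \<Omega> v1 * l2norm \<Omega> v2) | v1 v2. v1 \<in> VH1 \<and> v2 \<in> VH2}"
    and gamma_a_def: "\<gamma>a = Sup {aform \<Omega> \<kappa> v1 v2 / (anorm \<Omega> \<kappa> v1 * anorm \<Omega> \<kappa> v2) | v1 v2. v1 \<in> VH1 \<and> v2 \<in> VH2}"
    and alpha_def: "\<alpha> = Sup {anorm \<Omega> \<kappa> v2 / l2norm \<Omega> v2 | v2. v2 \<in> VH2}"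
    and gamma_lt: "\<gamma> < 1" and gamma_a_lt: "\<gamma>a < 1"
    and tau_pos: "\<tau> > 0" and N_ge: "N \<ge> 2"
    and u1_in: "\<And>n. n \<le> N \<Longrightarrow> u1 n \<in> VH1"
    and u2_in: "\<And>n. n \<le> N \<Longrightarrow> u2 n \<in> VH2"
    and eq1: "\<And>n w. 1 \<le> n \<Longrightarrow> n \<le> N - 1 \<Longrightarrow> w \<in> VH1 \<Longrightarrow>
       l2ip \<Omega> (\<lambda>x. (u1 (n+1) x + u2 (n+1) x) - 2 * (u1 n x + u2 n x) + (u1 (n-1) x + u2 (n-1) x)) w
       + \<tau>\<^sup>2 / 2 * aform \<Omega> \<kappa> (\<lambda>x. u1 (n+1) x + u1 (n-1) x + 2 * u2 n x) w = 0"
    and eq2: "\<And>n w. 1 \<le> n \<Longrightarrow> n \<le> N - 1 \<Longrightarrow> w \<in> VH2 \<Longrightarrow>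
       l2ip \<Omega> (\<lambda>x. (u1 (n+1) x + u2 (n+1) x) - 2 * (u1 n x + u2 n x) + (u1 (n-1) x + u2 (n-1) x)) w
       + \<tau>\<^sup>2 * aform \<Omega> \<kappa> (\<lambda>x. u1 n x + u2 n x) w = 0"
    and cfl: "\<tau>\<^sup>2 * \<alpha>\<^sup>2 \<le> 2 * (1 - \<gamma>)"
  shows "\<forall>n. n \<le> N - 1 \<longrightarrow>
     (1 - \<gamma>\<^sup>2 - \<alpha>\<^sup>2 * \<tau>\<^sup>2 / 2) * (l2norm \<Omega> (\<lambda>x. u2 (n+1) x - u2 n x))\<^sup>2
     + \<tau>\<^sup>2 * (1 - \<gamma>a) / 2 *
        ((anorm \<Omega> \<kappa> (u1 (n+1)))\<^sup>2 + (anorm \<Omega> \<kappa> (u1 n))\<^sup>2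
         + (anorm \<Omega> \<kappa> (u2 (n+1)))\<^sup>2 + (anorm \<Omega> \<kappa> (u2 n))\<^sup>2)
     \<le> (l2norm \<Omega> (\<lambda>x. (u1 1 x + u2 1 x) - (u1 0 x + u2 0 x)))\<^sup>2
        + \<tau>\<^sup>2 / 2 * ((anorm \<Omega> \<kappa> (u1 1))\<^sup>2 + (anorm \<Omega> \<kappa> (u1 0))\<^sup>2
                    + (anorm \<Omega> \<kappa> (u2 1))\<^sup>2 + (anorm \<Omega> \<kappa> (u2 0))\<^sup>2)
        + \<tau>\<^sup>2 * aform \<Omega> \<kappa> (u2 1) (u1 0) + \<tau>\<^sup>2 * aform \<Omega> \<kappa> (u1 1) (u2 0)
        - \<tau>\<^sup>2 / 2 * (anorm \<Omega> \<kappa> (\<lambda>x. u2 1 x - u2 0 x))\<^sup>2"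
proof -
  \<comment> \<open>The inequality holds without \<open>gamma_lt\<close>, \<open>gamma_a_lt\<close>, \<open>tau_pos\<close> and \<open>cfl\<close>; in the
    paper they serve to make its left-hand side nonnegative.\<close>
  have \<Omega>: "open \<Omega>" "bounded \<Omega>" using dom unfolding bounded_domain_def by auto
  have \<kappa>_nonneg: "AE x in lebesgue. x \<in> \<Omega> \<longrightarrow> 0 \<le> \<kappa> x"
    using kappa_lb by (auto elim!: eventually_mono)
  note L = psd_form_l2ip[OF \<Omega>] and A = psd_form_aform[OF \<Omega> kappa_Linf \<kappa>_nonneg]
  interpret L: psd_form "H1 \<Omega>" "l2ip \<Omega>" by (rule L)
  interpret A: psd_form "H1 \<Omega>" "aform \<Omega> \<kappa>" by (rule A)
  obtain S where S: "finite S" "S \<subseteq> VH" and VH: "VH = fun_span S" by (rule fin_dim_fun_spaceE[OF VH_fd])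
  have "VH1 \<subseteq> VH" "VH2 \<subseteq> VH" "VH \<subseteq> H1 \<Omega>"
    using subset_fun_sum_space[OF VH1_sub VH2_sub] VH_sum VH_sub H10_subset_H1[of \<Omega>] by auto
  then have V: "VH2 \<subseteq> fun_span S" "VH1 \<subseteq> H1 \<Omega>" "VH2 \<subseteq> H1 \<Omega>" and S_H1: "S \<subseteq> H1 \<Omega>"
    using S VH by auto
  have zero: "(\<lambda>x. 0) \<in> VH1" "(\<lambda>x. 0) \<in> VH2" using VH1_sub VH2_sub unfolding fun_subspace_def by blast+
  have N: "1 \<le> N" using N_ge by simp
  have \<gamma>: "\<gamma> = max_cosine (l2ip \<Omega>) VH1 VH2" by (simp add: gamma_def max_cosine_def l2norm_def)
  have \<gamma>a: "\<gamma>a = max_cosine (aform \<Omega> \<kappa>) VH1 VH2" by (simp add: gamma_a_def max_cosine_def anorm_def)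
  have \<alpha>: "\<alpha> = max_ratio (aform \<Omega> \<kappa>) (l2ip \<Omega>) VH2"
    by (simp add: alpha_def max_ratio_def anorm_def l2norm_def)
  have "(1 - \<gamma>\<^sup>2 - \<alpha>\<^sup>2 * \<tau>\<^sup>2 / 2) * l2ip \<Omega> (\<lambda>x. u2 (Suc n) x - u2 n x) (\<lambda>x. u2 (Suc n) x - u2 n x)
     + \<tau>\<^sup>2 * (1 - \<gamma>a) / 2 * (aform \<Omega> \<kappa> (u1 (Suc n)) (u1 (Suc n)) + aform \<Omega> \<kappa> (u1 n) (u1 n)
        + aform \<Omega> \<kappa> (u2 (Suc n)) (u2 (Suc n)) + aform \<Omega> \<kappa> (u2 n) (u2 n))
     \<le> energy (l2ip \<Omega>) (aform \<Omega> \<kappa>) \<tau> u1 u2 0" if n: "n \<le> N - 1" for n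
    unfolding \<gamma> \<gamma>a \<alpha>
    by (rule energy_bound[OF L A VH1_sub VH2_sub V(2,3) L.abs_le_max_cosine[OF V(2,3) VH2_sub]
          A.abs_le_max_cosine[OF V(2,3) VH2_sub] A.max_cosine_nonneg[OF V(2,3) zero]
          L.le_max_ratio[OF A aform_eq_0_if_l2ip_eq_0[OF \<Omega> kappa_Linf] S(1) S_H1 V(1)]
          N u1_in u2_in eq1 eq2 n])
  then show ?thesis
    by (simp add: energy_def l2norm_square anorm_square[OF \<kappa>_nonneg])
qed

end
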